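(* Let $S$ be a functional PTS specification. For any $\lambda\Pi/S$ context $\Gamma$ and any $\Gamma$-term $M$ of $\lambda\Pi/S$ (i.e. $\mathrm{WF}_{\lambda\Pi/S}(\Gamma)$ and $\Gamma\vdash_{\lambda\Pi/S}M:A$ for some $A$), there is a term $M^-$ of $\lambda\Pi^-/S$ such that $M\longrightarrow_\beta^* M^-$.
   Context: $\lambda\Pi$ is the PTS with sorts $\mathsf{Type},\mathsf{Kind}$, axiom $\mathsf{Type}:\mathsf{Kind}$ and rules $(\mathsf{Type},\mathsf{Type}),(\mathsf{Type},\mathsf{Kind})$ (terms $s\mid x\mid M\,N\mid\lambda x:A.M\mid\Pi x:A.B$, standard PTS typing rules). Given a well-formed $\lambda\Pi$ context $\Sigma$ and rewrite rules $R$, $\lambda\Pi/(\Sigma,R)$ has the $\lambda\Pi$ typing rules except that variables may also be declared in $\Sigma$ (and new declarations must avoid $\Sigma$) and conversion is modulo $\equiv_{\beta R}$, the congruence generated by $\beta$-reduction and the rewrite rules. For a PTS specification $S=(\mathcal S,\mathcal A,\mathcal R)$, $\lambda\Pi/S=\lambda\Pi/(\Sigma_S,R_S)$ where $\Sigma_S$ declares $u_s:\mathsf{Type}$, $\varepsilon_s:u_s\to\mathsf{Type}$ ($s\in\mathcal S$), $\dot s_1:u_{s_2}$ ($(s_1:s_2)\in\mathcal A$), $\dot\pi_{s_1s_2s_3}:\Pi\alpha:u_{s_1}.(\varepsilon_{s_1}\alpha\to u_{s_2})\to u_{s_3}$ ($(s_1,s_2,s_3)\in\mathcal R$), and $R_S$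 consists of $\varepsilon_{s_2}\dot s_1\leadsto u_{s_1}$ for $(s_1:s_2)\in\mathcal A$ and $\varepsilon_{s_3}(\dot\pi_{s_1s_2s_3}AB)\leadsto\Pi x:\varepsilon_{s_1}A.\,\varepsilon_{s_2}(B\,x)$ for $(s_1,s_2,s_3)\in\mathcal R$. A $\Gamma$-term $P$ of type $C$ is at the level of $\mathsf{Kind}$ if $\Gamma\vdash C:\mathsf{Kind}$. A $\mathsf{Kind}$-level $\beta$-redex is a subterm $(\lambda x:B.C)\,P$ at the level of $\mathsf{Kind}$ (in its typing context). The $\lambda\Pi^-/S$ terms are the well-typed $\lambda\Pi/S$ terms that contain no $\mathsf{Kind}$-level $\beta$-redex. *)

theory Defs
  imports Main
begin

text \<open>Bound/context variables are de Bruijn indices (Var 0 is the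
  most recently declared variable); the declarations of the signature Sigma are
  represented as constants Cst c (so new context declarations automatically
  avoid Sigma).\<close>

datatype 'c trm =
    TypeS
  | KindS
  | Var nat
  | Cst 'c
  | App "'c trm" "'c trm"
  | Lam "'c trm" "'c trm"
  | Prod "'c trm" "'c trm"

fun lift :: "nat \<Rightarrow> 'c trm \<Rightarrow> 'c trm" where
  "lift k TypeS = TypeS"
| "lift k KindS = KindS"
| "lift k (Var i) = (if i < k then Var i else Var (Suc i))"
| "lift k (Cst c) = Cst c"
| "lift k (App M N) = App (lift k M) (lift k N)"
| "lift k (Lam A M) = Lam (lift k A) (lift (Suc k) M)"
| "lift k (Prod A B) = Prod (lift k A) (lift (Suc k) B)"

fun subst :: "'c trm \<Rightarrow> nat \<Rightarrow> 'c trm \<Rightarrow> 'c trm" where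
  "subst TypeS k N = TypeS"
| "subst KindS k N = KindS"
| "subst (Var i) k N = (if i < k then Var i else if i = k then N else Var (i - 1))"
| "subst (Cst c) k N = Cst c"
| "subst (App M1 M2) k N = App (subst M1 k N) (subst M2 k N)"
| "subst (Lam A M) k N = Lam (subst A k N) (subst M (Suc k) (lift 0 N))"
| "subst (Prod A B) k N = Prod (subst A k N) (subst B (Suc k) (lift 0 N))"

definition liftn :: "nat \<Rightarrow> 'c trm \<Rightarrow> 'c trm" where
  "liftn n M = (lift 0 ^^ n) M"

inductive ctxclos :: "('c trm \<Rightarrow> 'c trm \<Rightarrow> bool) \<Rightarrow> 'c trm \<Rightarrow> 'c trm \<Rightarrow> bool"
  for r where
  root: "r M N \<Longrightarrow> ctxclos r M N"
| appL: "ctxclos r M M' \<Longrightarrow> ctxclos r (App M N) (App M' N)"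
| appR: "ctxclos r N N' \<Longrightarrow> ctxclos r (App M N) (App M N')"
| lamL: "ctxclos r A A' \<Longrightarrow> ctxclos r (Lam A M) (Lam A' M)"
| lamR: "ctxclos r M M' \<Longrightarrow> ctxclos r (Lam A M) (Lam A M')"
| prodL: "ctxclos r A A' \<Longrightarrow> ctxclos r (Prod A B) (Prod A' B)"
| prodR: "ctxclos r B B' \<Longrightarrow> ctxclos r (Prod A B) (Prod A B')"

inductive beta_root :: "'c trm \<Rightarrow> 'c trm \<Rightarrow> bool" where
  "beta_root (App (Lam A M) N) (subst M 0 N)"

abbreviation beta :: "'c trm \<Rightarrow> 'c trm \<Rightarrow> bool" where
  "beta \<equiv> ctxclos beta_root"

abbreviation beta_star :: "'c trm \<Rightarrow> 'c trm \<Rightarrow> bool" where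
  "beta_star \<equiv> beta\<^sup>*\<^sup>*"

definition conv_betaR :: "('c trm \<Rightarrow> 'c trm \<Rightarrow> bool) \<Rightarrow> 'c trm \<Rightarrow> 'c trm \<Rightarrow> bool" where
  "conv_betaR R = (\<lambda>x y. ctxclos (\<lambda>a b. beta_root a b \<or> R a b) x y
                        \<or> ctxclos (\<lambda>a b. beta_root a b \<or> R a b) y x)\<^sup>*\<^sup>*"

definition is_sort :: "'c trm \<Rightarrow> bool" where
  "is_sort s \<longleftrightarrow> s = TypeS \<or> s = KindS"

text \<open>sig c = Some A: the signature declares c : A.  R: root rewrite relation.\<close>
inductive wf_ctx :: "('c \<Rightarrow> 'c trm option) \<Rightarrow> ('c trm \<Rightarrow> 'c trm \<Rightarrow> bool) \<Rightarrow> 'c trm list \<Rightarrow> bool"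
  and has_type :: "('c \<Rightarrow> 'c trm option) \<Rightarrow> ('c trm \<Rightarrow> 'c trm \<Rightarrow> bool) \<Rightarrow> 'c trm list \<Rightarrow> 'c trm \<Rightarrow> 'c trm \<Rightarrow> bool"
  for sig R where
  wf_nil: "wf_ctx sig R []"
| wf_cons: "has_type sig R \<Gamma> A s \<Longrightarrow> is_sort s \<Longrightarrow> wf_ctx sig R (A # \<Gamma>)"
| t_ax: "wf_ctx sig R \<Gamma> \<Longrightarrow> has_type sig R \<Gamma> TypeS KindS"
| t_var: "wf_ctx sig R \<Gamma> \<Longrightarrow> i < length \<Gamma> \<Longrightarrow> has_type sig R \<Gamma> (Var i) (liftn (Suc i) (\<Gamma> ! i))"
| t_cst: "wf_ctx sig R \<Gamma> \<Longrightarrow> sig c = Some A \<Longrightarrow> has_type sig R \<Gamma> (Cst c) A"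
| t_prod: "has_type sig R \<Gamma> A TypeS \<Longrightarrow> has_type sig R (A # \<Gamma>) B s \<Longrightarrow> is_sort s
           \<Longrightarrow> has_type sig R \<Gamma> (Prod A B) s"
| t_lam: "has_type sig R \<Gamma> (Prod A B) s \<Longrightarrow> is_sort s \<Longrightarrow> has_type sig R (A # \<Gamma>) M B
           \<Longrightarrow> has_type sig R \<Gamma> (Lam A M) (Prod A B)"
| t_app: "has_type sig R \<Gamma> M (Prod A B) \<Longrightarrow> has_type sig R \<Gamma> N A
           \<Longrightarrow> has_type sig R \<Gamma> (App M N) (subst B 0 N)"
| t_conv: "has_type sig R \<Gamma> M A \<Longrightarrow> has_type sig R \<Gamma> B s \<Longrightarrow> is_sort s \<Longrightarrow> conv_betaR R A B
           \<Longrightarrow> has_type sig R \<Gamma> M B"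

definition pts_spec :: "'s set \<Rightarrow> ('s \<times> 's) set \<Rightarrow> ('s \<times> 's \<times> 's) set \<Rightarrow> bool" where
  "pts_spec Srt Ax Rl \<longleftrightarrow>
     (\<forall>(s1, s2) \<in> Ax. s1 \<in> Srt \<and> s2 \<in> Srt) \<and>
     (\<forall>(s1, s2, s3) \<in> Rl. s1 \<in> Srt \<and> s2 \<in> Srt \<and> s3 \<in> Srt)"

definition functional_spec :: "'s set \<Rightarrow> ('s \<times> 's) set \<Rightarrow> ('s \<times> 's \<times> 's) set \<Rightarrow> bool" where
  "functional_spec Srt Ax Rl \<longleftrightarrow>
     (\<forall>s1 s2 s2'. (s1, s2) \<in> Ax \<longrightarrow> (s1, s2') \<in> Ax \<longrightarrow> s2 = s2') \<and>
     (\<forall>s1 s2 s3 s3'. (s1, s2, s3) \<in> Rl \<longrightarrow> (s1, s2, s3') \<in> Rl \<longrightarrow> s3 = s3')"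

text \<open>Constants of Sigma_S: u_s, eps_s, dot s1 (annotated also with its axiom
  target s2), pi_{s1 s2 s3}.\<close>
datatype 's cst = U 's | Eps 's | Dot 's 's | PiC 's 's 's

fun sigS :: "'s set \<Rightarrow> ('s \<times> 's) set \<Rightarrow> ('s \<times> 's \<times> 's) set \<Rightarrow> 's cst \<Rightarrow> 's cst trm option" where
  "sigS Srt Ax Rl (U s) = (if s \<in> Srt then Some TypeS else None)"
| "sigS Srt Ax Rl (Eps s) = (if s \<in> Srt then Some (Prod (Cst (U s)) TypeS) else None)"
| "sigS Srt Ax Rl (Dot s1 s2) = (if (s1, s2) \<in> Ax then Some (Cst (U s2)) else None)"
| "sigS Srt Ax Rl (PiC s1 s2 s3) =
     (if (s1, s2, s3) \<in> Rl then
        Some (Prod (Cst (U s1))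
                (Prod (Prod (App (Cst (Eps s1)) (Var 0)) (Cst (U s2)))
                      (Cst (U s3))))
      else None)"

inductive RS :: "('s \<times> 's) set \<Rightarrow> ('s \<times> 's \<times> 's) set \<Rightarrow> 's cst trm \<Rightarrow> 's cst trm \<Rightarrow> bool"
  for Ax Rl where
  r_ax: "(s1, s2) \<in> Ax \<Longrightarrow> RS Ax Rl (App (Cst (Eps s2)) (Cst (Dot s1 s2))) (Cst (U s1))"
| r_rl: "(s1, s2, s3) \<in> Rl \<Longrightarrow>
         RS Ax Rl (App (Cst (Eps s3)) (App (App (Cst (PiC s1 s2 s3)) A) B))
                  (Prod (App (Cst (Eps s1)) A) (App (Cst (Eps s2)) (App (lift 0 B) (Var 0))))"

abbreviation wfS where "wfS Srt Ax Rl \<equiv> wf_ctx (sigS Srt Ax Rl) (RS Ax Rl)"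
abbreviation typS where "typS Srt Ax Rl \<equiv> has_type (sigS Srt Ax Rl) (RS Ax Rl)"

text \<open>subterm_ctx \<Gamma> M \<Delta> N: N occurs as a subterm of M, and \<Delta> is the context
  of that occurrence (\<Gamma> extended by the binders crossed).\<close>
inductive subterm_ctx :: "'c trm list \<Rightarrow> 'c trm \<Rightarrow> 'c trm list \<Rightarrow> 'c trm \<Rightarrow> bool" where
  refl: "subterm_ctx \<Gamma> M \<Gamma> M"
| appL: "subterm_ctx \<Gamma> M \<Delta> N \<Longrightarrow> subterm_ctx \<Gamma> (App M M2) \<Delta> N"
| appR: "subterm_ctx \<Gamma> M \<Delta> N \<Longrightarrow> subterm_ctx \<Gamma> (App M1 M) \<Delta> N"
| lamL: "subterm_ctx \<Gamma> A \<Delta> N \<Longrightarrow> subterm_ctx \<Gamma> (Lam A M) \<Delta> N"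
| lamR: "subterm_ctx (A # \<Gamma>) M \<Delta> N \<Longrightarrow> subterm_ctx \<Gamma> (Lam A M) \<Delta> N"
| prodL: "subterm_ctx \<Gamma> A \<Delta> N \<Longrightarrow> subterm_ctx \<Gamma> (Prod A B) \<Delta> N"
| prodR: "subterm_ctx (A # \<Gamma>) B \<Delta> N \<Longrightarrow> subterm_ctx \<Gamma> (Prod A B) \<Delta> N"

definition kind_level where
  "kind_level sig R \<Delta> P \<longleftrightarrow> (\<exists>C. has_type sig R \<Delta> P C \<and> has_type sig R \<Delta> C KindS)"

definition has_kind_redex where
  "has_kind_redex sig R \<Gamma> M \<longleftrightarrow>
     (\<exists>\<Delta> B C P. subterm_ctx \<Gamma> M \<Delta> (App (Lam B C) P) \<and>
                kind_level sig R \<Delta> (App (Lam B C) P))"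

definition minus_term where
  "minus_term Srt Ax Rl \<Gamma> M \<longleftrightarrow>
     (\<exists>A. typS Srt Ax Rl \<Gamma> M A) \<and> \<not> has_kind_redex (sigS Srt Ax Rl) (RS Ax Rl) \<Gamma> M"

end

theory Submission
  imports Defs "HOL-Library.Confluence"
begin

text \<open>Well-typed terms fall into three levels (kinds, type families, objects), and the level
  of a term can be read off syntactically from its head and from which context variables are
  family variables. Typing respects this classification: a term is a family exactly when its
  type has type \<open>Kind\<close>; this rests on subject reduction and uniqueness of types, hence on
  confluence of \<open>\<beta>R\<close>. So a \<open>Kind\<close>-level \<open>\<beta>\<close>-redex is an application of a family-level
  abstraction, and its argument is an object. Substituting an object for an object variable
  changes no levels and creates no family-level redex. Hence, normalising the function and the
  argument of an application first, one contraction at the root suffices, and \<open>M\<^sup>-\<close> is obtained by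
  structural recursion on \<open>M\<close>, without any normalisation theorem for \<open>\<beta>\<close>.\<close>

lemma lift_lift:
  "i < k + 1 \<Longrightarrow> lift (Suc k) (lift i t) = lift i (lift k t)"
  by (induct t arbitrary: i k) auto

lemma lift0_lift: "lift (Suc k) (lift 0 t) = lift 0 (lift k t)"
  using lift_lift[of 0 k t] by simp

lemma lift_subst [simp]:
  "j < i + 1 \<Longrightarrow> lift i (subst t j s) = subst (lift (i + 1) t) j (lift i s)"
  by (induct t arbitrary: i j s) (simp_all add: diff_Suc lift_lift split: nat.split)

lemma lift_subst_lt:
  "i < j + 1 \<Longrightarrow> lift i (subst t j s) = subst (lift i t) (j + 1) (lift i s)"
  by (induct t arbitrary: i j s) (auto simp: lift_lift)

lemma lift0_subst: "lift 0 (subst t k s) = subst (lift 0 t) (Suc k) (lift 0 s)"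
  using lift_subst_lt[of 0 k t s] by simp

lemma subst_lift [simp]: "subst (lift k t) k s = t"
  by (induct t arbitrary: k s) simp_all

lemma subst_lift_Var: "subst (lift (Suc k) t) k (Var k) = t"
  by (induct t arbitrary: k) auto

lemma subst_subst:
  "i < j + 1 \<Longrightarrow> subst (subst t (Suc j) (lift i v)) i (subst u j v) = subst (subst t i u) j v"
  by (induct t arbitrary: i j u v)
    (simp_all add: diff_Suc lift_lift [symmetric] lift_subst_lt split: nat.split)

lemma liftn_0 [simp]: "liftn 0 t = t"
  by (simp add: liftn_def)

lemma liftn_Suc: "liftn (Suc n) t = lift 0 (liftn n t)"
  by (simp add: liftn_def)

lemma lift_liftn_le: "k \<le> n \<Longrightarrow> lift k (liftn n t) = liftn (Suc n) t"
proof (induct n arbitrary: k)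
  case (Suc n)
  show ?case
  proof (cases k)
    case (Suc k')
    with Suc.prems have "lift k' (liftn n t) = liftn (Suc n) t"
      by (intro Suc.hyps) simp
    with Suc show ?thesis
      by (simp only: liftn_Suc lift0_lift)
  qed (simp add: liftn_Suc)
qed (simp add: liftn_def)

lemma lift_liftn: "lift (j + n) (liftn n t) = liftn n (lift j t)"
  by (induct n) (simp_all add: liftn_Suc lift0_lift)

lemma subst_liftn: "subst (liftn n t) (j + n) (liftn (j + n) s) = liftn n (subst t j (liftn j s))"
  by (induct n) (simp_all add: liftn_Suc flip: lift0_subst)

lemma sort_lift [simp]: "is_sort s \<Longrightarrow> lift k s = s"
  and sort_subst [simp]: "is_sort s \<Longrightarrow> subst s k N = s"
  by (auto simp: is_sort_def)

lemma sort_liftn [simp]: "is_sort s \<Longrightarrow> liftn n s = s"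
  by (induct n) (simp_all add: liftn_Suc)

lemma is_sort_TypeS [simp]: "is_sort TypeS"
  and is_sort_KindS [simp]: "is_sort KindS"
  by (simp_all add: is_sort_def)

lemma rtranclp_ctxclos_App:
  assumes "(ctxclos r)\<^sup>*\<^sup>* M M'" and "(ctxclos r)\<^sup>*\<^sup>* N N'"
  shows "(ctxclos r)\<^sup>*\<^sup>* (App M N) (App M' N')"
proof -
  from assms(1) have "(ctxclos r)\<^sup>*\<^sup>* (App M N) (App M' N)"
    by induct (auto intro: rtranclp.rtrancl_into_rtrancl ctxclos.appL)
  also from assms(2) have "(ctxclos r)\<^sup>*\<^sup>* (App M' N) (App M' N')"
    by induct (auto intro: rtranclp.rtrancl_into_rtrancl ctxclos.appR)
  finally show ?thesis .
qed

lemma rtranclp_ctxclos_Lam: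
  assumes "(ctxclos r)\<^sup>*\<^sup>* A A'" and "(ctxclos r)\<^sup>*\<^sup>* M M'"
  shows "(ctxclos r)\<^sup>*\<^sup>* (Lam A M) (Lam A' M')"
proof -
  from assms(1) have "(ctxclos r)\<^sup>*\<^sup>* (Lam A M) (Lam A' M)"
    by induct (auto intro: rtranclp.rtrancl_into_rtrancl ctxclos.lamL)
  also from assms(2) have "(ctxclos r)\<^sup>*\<^sup>* (Lam A' M) (Lam A' M')"
    by induct (auto intro: rtranclp.rtrancl_into_rtrancl ctxclos.lamR)
  finally show ?thesis .
qed

lemma rtranclp_ctxclos_Prod:
  assumes "(ctxclos r)\<^sup>*\<^sup>* A A'" and "(ctxclos r)\<^sup>*\<^sup>* B B'"
  shows "(ctxclos r)\<^sup>*\<^sup>* (Prod A B) (Prod A' B')"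
proof -
  from assms(1) have "(ctxclos r)\<^sup>*\<^sup>* (Prod A B) (Prod A' B)"
    by induct (auto intro: rtranclp.rtrancl_into_rtrancl ctxclos.prodL)
  also from assms(2) have "(ctxclos r)\<^sup>*\<^sup>* (Prod A' B) (Prod A' B')"
    by induct (auto intro: rtranclp.rtrancl_into_rtrancl ctxclos.prodR)
  finally show ?thesis .
qed

lemma ctxclos_mono: "ctxclos r M N \<Longrightarrow> (\<And>a b. r a b \<Longrightarrow> r' a b) \<Longrightarrow> ctxclos r' M N"
  by (induct rule: ctxclos.induct) (auto intro: ctxclos.intros)

lemma ctxclos_lift:
  assumes "\<And>a b k. r a b \<Longrightarrow> r (lift k a) (lift k b)"
  shows "ctxclos r M N \<Longrightarrow> ctxclos r (lift k M) (lift k N)"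
  by (induct arbitrary: k rule: ctxclos.induct) (auto intro: ctxclos.intros assms)

lemma ctxclos_subst:
  assumes "\<And>a b k L. r a b \<Longrightarrow> r (subst a k L) (subst b k L)"
  shows "ctxclos r M N \<Longrightarrow> ctxclos r (subst M k L) (subst N k L)"
  by (induct arbitrary: k L rule: ctxclos.induct) (auto intro: ctxclos.intros assms)

lemma rtranclp_ctxclos_subst_arg:
  assumes "\<And>a b k. r a b \<Longrightarrow> r (lift k a) (lift k b)"
  shows "ctxclos r N N' \<Longrightarrow> (ctxclos r)\<^sup>*\<^sup>* (subst M k N) (subst M k N')"
proof (induct M arbitrary: k N N')
  case (Lam A M)
  then show ?case using ctxclos_lift[where r=r, OF assms] by (simp add: rtranclp_ctxclos_Lam)
next
  case (Prod A M)
  then show ?case using ctxclos_lift[where r=r, OF assms] by (simp add: rtranclp_ctxclos_Prod)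
qed (auto simp: rtranclp_ctxclos_App)

lemma beta_root_lift: "beta_root a b \<Longrightarrow> beta_root (lift k a) (lift k b)"
  by (induct rule: beta_root.induct) (auto intro: beta_root.intros[of _ "lift (Suc k) _", simplified])

lemma beta_root_subst: "beta_root a b \<Longrightarrow> beta_root (subst a k L) (subst b k L)"
  by (induct rule: beta_root.induct)
    (metis beta_root.intros subst.simps(5,6) subst_subst[of 0 k] zero_less_Suc Suc_eq_plus1)

lemma RS_lift: "RS Ax Rl a b \<Longrightarrow> RS Ax Rl (lift k a) (lift k b)"
  by (induct rule: RS.induct) (auto intro: RS.intros simp: lift0_lift)

lemma RS_subst: "RS Ax Rl a b \<Longrightarrow> RS Ax Rl (subst a k L) (subst b k L)"
  by (induct rule: RS.induct) (auto intro: RS.intros simp flip: lift0_subst)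

abbreviation red :: "('c trm \<Rightarrow> 'c trm \<Rightarrow> bool) \<Rightarrow> 'c trm \<Rightarrow> 'c trm \<Rightarrow> bool" where
  "red R \<equiv> ctxclos (\<lambda>a b. beta_root a b \<or> R a b)"

abbreviation redS where "redS Ax Rl \<equiv> red (RS Ax Rl)"
abbreviation redsS where "redsS Ax Rl \<equiv> (redS Ax Rl)\<^sup>*\<^sup>*"
abbreviation convS where "convS Ax Rl \<equiv> conv_betaR (RS Ax Rl)"

lemma conv_betaR_eq_equivclp: "conv_betaR R = equivclp (red R)"
  by (simp add: conv_betaR_def equivclp_def symclp_def [abs_def])

lemma conv_betaR_refl [simp]: "conv_betaR R M M"
  by (simp add: conv_betaR_def)

lemma conv_betaR_sym: "conv_betaR R M N \<Longrightarrow> conv_betaR R N M"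
  unfolding conv_betaR_eq_equivclp by (rule equivclp_sym)

lemma conv_betaR_trans: "conv_betaR R M N \<Longrightarrow> conv_betaR R N L \<Longrightarrow> conv_betaR R M L"
  unfolding conv_betaR_def by (rule rtranclp_trans)

lemma reds_conv_betaR: "(red R)\<^sup>*\<^sup>* M N \<Longrightarrow> conv_betaR R M N"
  unfolding conv_betaR_eq_equivclp by (rule predicate2D[OF rtranlcp_le_equivclp])

lemma red_conv_betaR: "red R M N \<Longrightarrow> conv_betaR R M N"
  by (rule reds_conv_betaR) simp

lemma conv_betaR_map:
  assumes "\<And>M N. red R M N \<Longrightarrow> red R (f M) (f N)"
  shows "conv_betaR R M N \<Longrightarrow> conv_betaR R (f M) (f N)"
  unfolding conv_betaR_def by (induct rule: rtranclp_induct) (auto intro: rtranclp.rtrancl_into_rtrancl assms)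

lemma conv_betaR_ProdL: "conv_betaR R A A' \<Longrightarrow> conv_betaR R (Prod A B) (Prod A' B)"
  by (rule conv_betaR_map) (auto intro: ctxclos.prodL)

lemma conv_betaR_ProdR: "conv_betaR R B B' \<Longrightarrow> conv_betaR R (Prod A B) (Prod A B')"
  by (rule conv_betaR_map) (auto intro: ctxclos.prodR)

lemma red_root_lift: "beta_root a b \<or> RS Ax Rl a b \<Longrightarrow> beta_root (lift k a) (lift k b) \<or> RS Ax Rl (lift k a) (lift k b)"
  using beta_root_lift RS_lift by blast

lemma red_root_subst: "beta_root a b \<or> RS Ax Rl a b \<Longrightarrow> beta_root (subst a k L) (subst b k L) \<or> RS Ax Rl (subst a k L) (subst b k L)"
  using beta_root_subst RS_subst by blast

lemma conv_lift: "convS Ax Rl M N \<Longrightarrow> convS Ax Rl (lift k M) (lift k N)"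
  by (rule conv_betaR_map) (rule ctxclos_lift[where r="\<lambda>a b. beta_root a b \<or> RS Ax Rl a b", OF red_root_lift])

lemma conv_subst: "convS Ax Rl M N \<Longrightarrow> convS Ax Rl (subst M k L) (subst N k L)"
  by (rule conv_betaR_map) (rule ctxclos_subst[where r="\<lambda>a b. beta_root a b \<or> RS Ax Rl a b", OF red_root_subst])

lemma conv_subst_arg:
  assumes "convS Ax Rl N N'"
  shows "convS Ax Rl (subst M k N) (subst M k N')"
proof -
  have red_conv: "convS Ax Rl (subst M k a) (subst M k b)" if "redS Ax Rl a b" for a b
    using rtranclp_ctxclos_subst_arg[where r="\<lambda>a b. beta_root a b \<or> RS Ax Rl a b", OF red_root_lift that] by (rule reds_conv_betaR)
  from assms have "equivclp (redS Ax Rl) N N'"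
    by (simp add: conv_betaR_eq_equivclp)
  then show ?thesis
  proof (induct rule: equivclp_induct)
    case (step y z)
    from step(2) have "convS Ax Rl (subst M k y) (subst M k z)"
      using red_conv conv_betaR_sym by blast
    with step(3) show ?case
      by (rule conv_betaR_trans)
  qed simp
qed

section \<open>Confluence\<close>

inductive par :: "('s \<times> 's) set \<Rightarrow> ('s \<times> 's \<times> 's) set \<Rightarrow> 's cst trm \<Rightarrow> 's cst trm \<Rightarrow> bool"
  for Ax Rl where
  par_TypeS: "par Ax Rl TypeS TypeS"
| par_KindS: "par Ax Rl KindS KindS"
| par_Var: "par Ax Rl (Var i) (Var i)"
| par_Cst: "par Ax Rl (Cst c) (Cst c)"
| par_App: "par Ax Rl M M' \<Longrightarrow> par Ax Rl N N' \<Longrightarrow> par Ax Rl (App M N) (App M' N')"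
| par_Lam: "par Ax Rl A A' \<Longrightarrow> par Ax Rl M M' \<Longrightarrow> par Ax Rl (Lam A M) (Lam A' M')"
| par_Prod: "par Ax Rl A A' \<Longrightarrow> par Ax Rl B B' \<Longrightarrow> par Ax Rl (Prod A B) (Prod A' B')"
| par_beta: "par Ax Rl M M' \<Longrightarrow> par Ax Rl N N' \<Longrightarrow> par Ax Rl (App (Lam A M) N) (subst M' 0 N')"
| par_ax: "(s1, s2) \<in> Ax \<Longrightarrow> par Ax Rl (App (Cst (Eps s2)) (Cst (Dot s1 s2))) (Cst (U s1))"
| par_rl: "(s1, s2, s3) \<in> Rl \<Longrightarrow> par Ax Rl A A' \<Longrightarrow> par Ax Rl B B' \<Longrightarrow>
     par Ax Rl (App (Cst (Eps s3)) (App (App (Cst (PiC s1 s2 s3)) A) B))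
       (Prod (App (Cst (Eps s1)) A') (App (Cst (Eps s2)) (App (lift 0 B') (Var 0))))"

lemma par_refl [simp, intro]: "par Ax Rl M M"
  by (induct M) (auto intro: par.intros)

lemma par_lift: "par Ax Rl M M' \<Longrightarrow> par Ax Rl (lift k M) (lift k M')"
proof (induct arbitrary: k rule: par.induct)
  case (par_beta M M' N N' A)
  then show ?case
    using par.par_beta[of Ax Rl "lift (Suc k) M" "lift (Suc k) M'" "lift k N" "lift k N'" "lift k A"]
    by simp
next
  case (par_rl s1 s2 s3 A A' B B')
  then show ?case
    using par.par_rl[of s1 s2 s3 Rl Ax "lift k A" "lift k A'" "lift k B" "lift k B'"]
    by (simp add: lift0_lift)
qed (auto intro: par.intros)

lemma par_subst:
  "par Ax Rl M M' \<Longrightarrow> par Ax Rl N N' \<Longrightarrow> par Ax Rl (subst M k N) (subst M' k N')"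
proof (induct arbitrary: k N N' rule: par.induct)
  case (par_beta M M' L L' A)
  have "par Ax Rl (App (Lam (subst A k N) (subst M (Suc k) (lift 0 N))) (subst L k N))
     (subst (subst M' (Suc k) (lift 0 N')) 0 (subst L' k N'))"
    using par_beta by (intro par.par_beta) (auto intro: par_lift)
  then show ?case
    using subst_subst[of 0 k M' N' L'] by simp
next
  case (par_rl s1 s2 s3 A A' B B')
  then show ?case
    by (simp add: par.par_rl flip: lift0_subst)
next
  case (par_Lam A A' M M')
  then show ?case by (simp add: par.par_Lam par_lift)
next
  case (par_Prod A A' B B')
  then show ?case by (simp add: par.par_Prod par_lift)
qed (auto intro: par.intros par_lift)

text \<open>Takahashi's complete development: contract every redex visible in the term.\<close>

fun complete_dev :: "('s \<times> 's) set \<Rightarrow> ('s \<times> 's \<times> 's) set \<Rightarrow> 's cst trm \<Rightarrow> 's cst trm" where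
  "complete_dev Ax Rl (App (Lam A M) N) = subst (complete_dev Ax Rl M) 0 (complete_dev Ax Rl N)"
| "complete_dev Ax Rl (App (Cst (Eps s)) (Cst (Dot s1 s2))) =
     (if s = s2 \<and> (s1, s2) \<in> Ax then Cst (U s1) else App (Cst (Eps s)) (Cst (Dot s1 s2)))"
| "complete_dev Ax Rl (App (Cst (Eps s)) (App (App (Cst (PiC s1 s2 s3)) A) B)) =
     (if s = s3 \<and> (s1, s2, s3) \<in> Rl
      then Prod (App (Cst (Eps s1)) (complete_dev Ax Rl A))
             (App (Cst (Eps s2)) (App (lift 0 (complete_dev Ax Rl B)) (Var 0)))
      else App (Cst (Eps s))
             (App (App (Cst (PiC s1 s2 s3)) (complete_dev Ax Rl A)) (complete_dev Ax Rl B)))"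
| "complete_dev Ax Rl (App M N) = App (complete_dev Ax Rl M) (complete_dev Ax Rl N)"
| "complete_dev Ax Rl (Lam A M) = Lam (complete_dev Ax Rl A) (complete_dev Ax Rl M)"
| "complete_dev Ax Rl (Prod A M) = Prod (complete_dev Ax Rl A) (complete_dev Ax Rl M)"
| "complete_dev Ax Rl M = M"

lemma complete_dev_App_no_redex:
  assumes "\<And>A M'. M \<noteq> Lam A M'"
    and "\<And>s s1 s2. M = Cst (Eps s) \<Longrightarrow> N \<noteq> Cst (Dot s1 s2)"
    and "\<And>s s1 s2 s3 A B. M = Cst (Eps s) \<Longrightarrow> N \<noteq> App (App (Cst (PiC s1 s2 s3)) A) B"
  shows "complete_dev Ax Rl (App M N) = App (complete_dev Ax Rl M) (complete_dev Ax Rl N)"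
  using assms by (cases "(Ax, Rl, App M N)" rule: complete_dev.cases) (simp_all, metis+)

inductive_cases par_LamE: "par Ax Rl (Lam A M) N"
inductive_cases par_CstE: "par Ax Rl (Cst c) N"
inductive_cases par_PiC_AppE: "par Ax Rl (App (Cst (PiC s1 s2 s3)) A) N"
inductive_cases par_PiC_App_AppE: "par Ax Rl (App (App (Cst (PiC s1 s2 s3)) A) B) N"

lemma par_App_complete_dev:
  assumes M: "par Ax Rl M M'" "par Ax Rl M' (complete_dev Ax Rl M)"
    and N: "par Ax Rl N N'" "par Ax Rl N' (complete_dev Ax Rl N)"
  shows "par Ax Rl (App M' N') (complete_dev Ax Rl (App M N))"
proof -
  consider (beta) A M0 where "M = Lam A M0"
    | (ax) s s1 s2 where "M = Cst (Eps s)" "N = Cst (Dot s1 s2)"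
    | (rl) s s1 s2 s3 A B where "M = Cst (Eps s)" "N = App (App (Cst (PiC s1 s2 s3)) A) B"
    | (other) "complete_dev Ax Rl (App M N) = App (complete_dev Ax Rl M) (complete_dev Ax Rl N)"
    using complete_dev_App_no_redex by metis
  then show ?thesis
  proof cases
    case beta
    with M obtain A' M0' where "M' = Lam A' M0'" "par Ax Rl M0' (complete_dev Ax Rl M0)"
      by (auto elim!: par_LamE)
    with beta N show ?thesis
      by (auto intro: par.par_beta)
  next
    case ax
    with M N show ?thesis
      by (auto elim!: par_CstE intro: par.intros)
  next
    case rl
    with N obtain A' B' where "N' = App (App (Cst (PiC s1 s2 s3)) A') B'"
      "par Ax Rl A' (complete_dev Ax Rl A)" "par Ax Rl B' (complete_dev Ax Rl B)"
      by (auto elim!: par_PiC_App_AppE par_PiC_AppE par_CstE)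
    with rl M show ?thesis
      by (auto elim!: par_CstE intro!: par.intros par_lift)
  next
    case other
    with M N show ?thesis
      by (auto intro: par.intros)
  qed
qed

lemma par_complete_dev: "par Ax Rl M N \<Longrightarrow> par Ax Rl N (complete_dev Ax Rl M)"
proof (induct rule: par.induct)
  case (par_App M M' N N')
  then show ?case by (rule par_App_complete_dev)
next
  case (par_beta M M' N N' A)
  then show ?case by (simp add: par_subst)
next
  case (par_rl s1 s2 s3 A A' B B')
  then show ?case by (auto intro!: par.intros par_lift)
qed (auto intro: par.intros)

lemma strong_confluentp_par: "strong_confluentp (par Ax Rl)"
proof (rule strong_confluentpI)
  fix M N1 N2
  assume "par Ax Rl M N1" "par Ax Rl M N2"
  then have "par Ax Rl N1 (complete_dev Ax Rl M)" "par Ax Rl N2 (complete_dev Ax Rl M)"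
    by (simp_all add: par_complete_dev)
  then show "\<exists>P. (par Ax Rl)\<^sup>*\<^sup>* N1 P \<and> (par Ax Rl)\<^sup>=\<^sup>= N2 P"
    by blast
qed

lemma red_par: "redS Ax Rl M N \<Longrightarrow> par Ax Rl M N"
  by (induct rule: ctxclos.induct) (auto intro: par.intros elim!: beta_root.cases RS.cases)

lemma par_reds: "par Ax Rl M N \<Longrightarrow> redsS Ax Rl M N"
proof (induct rule: par.induct)
  case (par_beta M M' N N' A)
  have "redsS Ax Rl (App (Lam A M) N) (App (Lam A M') N')"
    using par_beta by (auto intro: rtranclp_ctxclos_App rtranclp_ctxclos_Lam)
  also have "redS Ax Rl (App (Lam A M') N') (subst M' 0 N')"
    by (auto intro: ctxclos.root beta_root.intros)
  finally show ?case .
next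
  case (par_ax s1 s2)
  then show ?case by (auto intro: ctxclos.root RS.intros)
next
  case (par_rl s1 s2 s3 A A' B B')
  have "redsS Ax Rl (App (Cst (Eps s3)) (App (App (Cst (PiC s1 s2 s3)) A) B))
                    (App (Cst (Eps s3)) (App (App (Cst (PiC s1 s2 s3)) A') B'))"
    using par_rl by (auto intro!: rtranclp_ctxclos_App)
  also have "redS Ax Rl (App (Cst (Eps s3)) (App (App (Cst (PiC s1 s2 s3)) A') B'))
     (Prod (App (Cst (Eps s1)) A') (App (Cst (Eps s2)) (App (lift 0 B') (Var 0))))"
    using par_rl by (auto intro: ctxclos.root RS.intros)
  finally show ?case .
qed (auto intro: rtranclp_ctxclos_App rtranclp_ctxclos_Lam rtranclp_ctxclos_Prod)

lemma reds_eq_rtranclp_par: "redsS Ax Rl = (par Ax Rl)\<^sup>*\<^sup>*"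
proof (intro ext iffI)
  show "redsS Ax Rl M N \<Longrightarrow> (par Ax Rl)\<^sup>*\<^sup>* M N" for M N
    by (induct rule: rtranclp_induct) (auto intro: rtranclp.rtrancl_into_rtrancl red_par)
  show "(par Ax Rl)\<^sup>*\<^sup>* M N \<Longrightarrow> redsS Ax Rl M N" for M N
    by (induct rule: rtranclp_induct) (auto intro: rtranclp_trans par_reds)
qed

lemma confluentp_red: "confluentp (redS Ax Rl)"
proof -
  have "confluentp (par Ax Rl)"
    by (rule strong_confluentp_imp_confluentp[OF strong_confluentp_par])
  then show ?thesis
    by (simp add: confluentp_def rtranclp_conversep reds_eq_rtranclp_par)
qed

theorem church_rosser:
  assumes "convS Ax Rl M N"
  shows "\<exists>P. redsS Ax Rl M P \<and> redsS Ax Rl N P"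
proof -
  have "(redsS Ax Rl OO (redsS Ax Rl)\<inverse>\<inverse>) M N"
    using assms
    by (simp add: conv_betaR_eq_equivclp rtranclp_conversep
        semiconfluentp_equivclp[OF confluentp_imp_semiconfluentp[OF confluentp_red]])
  then show ?thesis
    by blast
qed

inductive_cases ctxclos_TypeSE: "ctxclos r TypeS N"
inductive_cases ctxclos_KindSE: "ctxclos r KindS N"
inductive_cases ctxclos_VarE: "ctxclos r (Var i) N"
inductive_cases ctxclos_CstE: "ctxclos r (Cst c) N"
inductive_cases ctxclos_AppE: "ctxclos r (App M N) X"
inductive_cases ctxclos_LamE: "ctxclos r (Lam A M) X"
inductive_cases ctxclos_ProdE: "ctxclos r (Prod A B) N"
inductive_cases beta_rootE: "beta_root M N"
inductive_cases RSE: "RS Ax Rl M N"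

lemma reds_from_atom:
  assumes "redsS Ax Rl M N" and "M = TypeS \<or> M = KindS \<or> M = Var i \<or> M = Cst c"
  shows "N = M"
  using assms
  by (induct rule: rtranclp_induct)
    (auto elim!: ctxclos_TypeSE ctxclos_KindSE ctxclos_VarE ctxclos_CstE beta_rootE RSE)

lemma reds_from_Prod:
  "redsS Ax Rl (Prod A B) N \<Longrightarrow> \<exists>A' B'. N = Prod A' B' \<and> redsS Ax Rl A A' \<and> redsS Ax Rl B B'"
proof (induct rule: rtranclp_induct)
  case (step N N')
  then show ?case
    by (fastforce elim!: ctxclos_ProdE beta_rootE RSE intro: rtranclp.rtrancl_into_rtrancl)
qed auto

lemma reds_common_conv: "redsS Ax Rl M P \<Longrightarrow> redsS Ax Rl N P \<Longrightarrow> convS Ax Rl M N"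
  by (rule conv_betaR_trans[OF reds_conv_betaR conv_betaR_sym[OF reds_conv_betaR]])

lemma conv_ProdD:
  assumes "convS Ax Rl (Prod A B) (Prod A' B')"
  shows "convS Ax Rl A A'" and "convS Ax Rl B B'"
proof -
  obtain P where "redsS Ax Rl (Prod A B) P" "redsS Ax Rl (Prod A' B') P"
    using church_rosser[OF assms] by blast
  then obtain X Y where "redsS Ax Rl A X" "redsS Ax Rl B Y" "redsS Ax Rl A' X" "redsS Ax Rl B' Y"
    by (fastforce dest!: reds_from_Prod)
  then show "convS Ax Rl A A'" and "convS Ax Rl B B'"
    by (simp_all add: reds_common_conv)
qed

lemma conv_atom_reds:
  assumes "convS Ax Rl M N" and "M = TypeS \<or> M = KindS \<or> M = Var i \<or> M = Cst c"
  shows "redsS Ax Rl N M"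
proof -
  obtain P where MP: "redsS Ax Rl M P" and NP: "redsS Ax Rl N P"
    using church_rosser[OF assms(1)] by blast
  from MP assms(2) have "P = M"
    by (rule reds_from_atom)
  with NP show ?thesis
    by simp
qed

lemma not_conv_TypeS_KindS: "\<not> convS Ax Rl TypeS KindS"
  using conv_atom_reds[of Ax Rl TypeS KindS] reds_from_atom by blast

lemma conv_sorts_eq: "is_sort s \<Longrightarrow> is_sort s' \<Longrightarrow> convS Ax Rl s s' \<Longrightarrow> s = s'"
  using not_conv_TypeS_KindS conv_betaR_sym unfolding is_sort_def by blast

lemma red_cases_Prod:
  "redS Ax Rl (Prod A B) X \<Longrightarrow>
    (\<exists>A'. X = Prod A' B \<and> redS Ax Rl A A') \<or> (\<exists>B'. X = Prod A B' \<and> redS Ax Rl B B')"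
  by (erule ctxclos_ProdE) (auto elim: beta_rootE RSE)

lemma red_cases_Lam:
  "redS Ax Rl (Lam A M) X \<Longrightarrow>
    (\<exists>A'. X = Lam A' M \<and> redS Ax Rl A A') \<or> (\<exists>M'. X = Lam A M' \<and> redS Ax Rl M M')"
  by (erule ctxclos_LamE) (auto elim: beta_rootE RSE)

lemma red_cases_App:
  "redS Ax Rl (App M N) X \<Longrightarrow> beta_root (App M N) X \<or> RS Ax Rl (App M N) X \<or>
    (\<exists>M'. X = App M' N \<and> redS Ax Rl M M') \<or> (\<exists>N'. X = App M N' \<and> redS Ax Rl N N')"
  by (erule ctxclos_AppE) auto

lemma beta_star_reds: "beta_star M N \<Longrightarrow> redsS Ax Rl M N"
  by (induct rule: rtranclp_induct) (auto intro: rtranclp.rtrancl_into_rtrancl ctxclos_mono)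

lemma typ_wf: "typS Srt Ax Rl \<Gamma> M A \<Longrightarrow> wfS Srt Ax Rl \<Gamma>"
  by (induct rule: wf_ctx_has_type.inducts(2)[where ?P1.0="\<lambda>_. True"])
    (auto intro: wf_ctx_has_type.intros)

lemma wf_ConsE: "wfS Srt Ax Rl (A # \<Gamma>) \<Longrightarrow> \<exists>s. is_sort s \<and> typS Srt Ax Rl \<Gamma> A s"
  by (cases rule: wf_ctx.cases) auto

lemma typ_TypeS_KindS [simp]: "wfS Srt Ax Rl \<Gamma> \<Longrightarrow> typS Srt Ax Rl \<Gamma> TypeS KindS"
  by (rule wf_ctx_has_type.t_ax)

lemma typ_U: "wfS Srt Ax Rl \<Gamma> \<Longrightarrow> s \<in> Srt \<Longrightarrow> typS Srt Ax Rl \<Gamma> (Cst (U s)) TypeS"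
  by (rule wf_ctx_has_type.t_cst) auto

lemma typ_Eps: "wfS Srt Ax Rl \<Gamma> \<Longrightarrow> s \<in> Srt \<Longrightarrow> typS Srt Ax Rl \<Gamma> (Cst (Eps s)) (Prod (Cst (U s)) TypeS)"
  by (rule wf_ctx_has_type.t_cst) auto

lemma typ_Var0: "wfS Srt Ax Rl (A # \<Gamma>) \<Longrightarrow> typS Srt Ax Rl (A # \<Gamma>) (Var 0) (lift 0 A)"
  using wf_ctx_has_type.t_var[of _ _ "A # \<Gamma>" 0] by (simp add: liftn_def)

lemma typ_ProdE:
  "typS Srt Ax Rl \<Gamma> (Prod A B) C \<Longrightarrow>
   \<exists>s. typS Srt Ax Rl \<Gamma> A TypeS \<and> typS Srt Ax Rl (A # \<Gamma>) B s \<and> is_sort s \<and> convS Ax Rl s C"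
proof (induct \<Gamma> "Prod A B" C rule: wf_ctx_has_type.inducts(2)[where ?P1.0="\<lambda>_. True"])
  case (t_conv \<Gamma> A' B' s)
  then show ?case by (metis conv_betaR_trans)
qed auto

lemma typ_LamE:
  "typS Srt Ax Rl \<Gamma> (Lam A M) C \<Longrightarrow>
   \<exists>B s. typS Srt Ax Rl \<Gamma> (Prod A B) s \<and> is_sort s \<and> typS Srt Ax Rl (A # \<Gamma>) M B
     \<and> convS Ax Rl (Prod A B) C"
proof (induct \<Gamma> "Lam A M" C rule: wf_ctx_has_type.inducts(2)[where ?P1.0="\<lambda>_. True"])
  case (t_conv \<Gamma> A' B' s)
  then show ?case by (metis conv_betaR_trans)
qed fastforce+

lemma typ_AppE:
  "typS Srt Ax Rl \<Gamma> (App M N) C \<Longrightarrow>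
   \<exists>A B. typS Srt Ax Rl \<Gamma> M (Prod A B) \<and> typS Srt Ax Rl \<Gamma> N A \<and> convS Ax Rl (subst B 0 N) C"
proof (induct \<Gamma> "App M N" C rule: wf_ctx_has_type.inducts(2)[where ?P1.0="\<lambda>_. True"])
  case (t_conv \<Gamma> A' B' s)
  then show ?case by (metis conv_betaR_trans)
qed fastforce+

lemma typ_VarE:
  "typS Srt Ax Rl \<Gamma> (Var i) C \<Longrightarrow>
   wfS Srt Ax Rl \<Gamma> \<and> i < length \<Gamma> \<and> convS Ax Rl (liftn (Suc i) (\<Gamma> ! i)) C"
proof (induct \<Gamma> "Var i :: 'a cst trm" C rule: wf_ctx_has_type.inducts(2)[where ?P1.0="\<lambda>_. True"])
  case (t_conv \<Gamma> A' B' s)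
  then show ?case by (metis conv_betaR_trans)
qed auto

lemma typ_CstE:
  "typS Srt Ax Rl \<Gamma> (Cst c) C \<Longrightarrow>
   \<exists>A. sigS Srt Ax Rl c = Some A \<and> wfS Srt Ax Rl \<Gamma> \<and> convS Ax Rl A C"
proof (induct \<Gamma> "Cst c :: 'a cst trm" C rule: wf_ctx_has_type.inducts(2)[where ?P1.0="\<lambda>_. True"])
  case (t_conv \<Gamma> A' B' s)
  then show ?case by (metis conv_betaR_trans)
qed auto

lemma typ_TypeSE: "typS Srt Ax Rl \<Gamma> TypeS C \<Longrightarrow> convS Ax Rl KindS C"
proof (induct \<Gamma> "TypeS :: 'a cst trm" C rule: wf_ctx_has_type.inducts(2)[where ?P1.0="\<lambda>_. True"])
  case (t_conv \<Gamma> A' B' s)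
  then show ?case by (metis conv_betaR_trans)
qed auto

lemma KindS_untyped: "\<not> typS Srt Ax Rl \<Gamma> KindS C"
proof
  show "typS Srt Ax Rl \<Gamma> KindS C \<Longrightarrow> False"
    by (induct \<Gamma> "KindS :: 'a cst trm" C rule: wf_ctx_has_type.inducts(2)[where ?P1.0="\<lambda>_. True"]) auto
qed

lemma sig_closed: "sigS Srt Ax Rl c = Some A \<Longrightarrow> lift k A = A \<and> subst A k N = A"
  by (cases c) (auto split: if_splits)

fun is_family_cst :: "'s cst \<Rightarrow> bool" where
  "is_family_cst (U s) = True"
| "is_family_cst (Eps s) = True"
| "is_family_cst (Dot s1 s2) = False"
| "is_family_cst (PiC s1 s2 s3) = False"

lemma typ_PiC_decl:
  assumes wf: "wfS Srt Ax Rl \<Gamma>" and S: "s1 \<in> Srt" "s2 \<in> Srt" "s3 \<in> Srt"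
  shows "typS Srt Ax Rl \<Gamma>
    (Prod (Cst (U s1)) (Prod (Prod (App (Cst (Eps s1)) (Var 0)) (Cst (U s2))) (Cst (U s3)))) TypeS"
proof -
  let ?\<Gamma>1 = "Cst (U s1) # \<Gamma>" and ?E = "App (Cst (Eps s1)) (Var 0)"
  have U1: "typS Srt Ax Rl \<Gamma> (Cst (U s1)) TypeS"
    using wf S(1) by (rule typ_U)
  then have wf1: "wfS Srt Ax Rl ?\<Gamma>1"
    by (rule wf_cons) simp
  have "typS Srt Ax Rl ?\<Gamma>1 ?E (subst TypeS 0 (Var 0))"
    using typ_Eps[OF wf1 S(1)] typ_Var0[OF wf1] by (intro wf_ctx_has_type.t_app) simp_all
  then have E: "typS Srt Ax Rl ?\<Gamma>1 ?E TypeS"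
    by simp
  moreover have "wfS Srt Ax Rl (?E # ?\<Gamma>1)"
    using E by (rule wf_cons) simp
  ultimately have E2: "typS Srt Ax Rl ?\<Gamma>1 (Prod ?E (Cst (U s2))) TypeS"
    using S(2) by (auto intro: wf_ctx_has_type.t_prod typ_U)
  moreover have "wfS Srt Ax Rl (Prod ?E (Cst (U s2)) # ?\<Gamma>1)"
    using E2 by (rule wf_cons) simp
  ultimately have "typS Srt Ax Rl ?\<Gamma>1 (Prod (Prod ?E (Cst (U s2))) (Cst (U s3))) TypeS"
    using S(3) by (auto intro: wf_ctx_has_type.t_prod typ_U)
  with U1 show ?thesis
    by (rule wf_ctx_has_type.t_prod) simp
qed

lemma sig_decl_typed:
  assumes ps: "pts_spec Srt Ax Rl" and wf: "wfS Srt Ax Rl \<Gamma>" and c: "sigS Srt Ax Rl c = Some A"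
  shows "typS Srt Ax Rl \<Gamma> A (if is_family_cst c then KindS else TypeS)"
proof (cases c)
  case (U s)
  with c wf show ?thesis
    by (simp split: if_splits)
next
  case (Eps s)
  with c have A: "A = Prod (Cst (U s)) TypeS" and "s \<in> Srt"
    by (simp_all split: if_splits)
  then have U: "typS Srt Ax Rl \<Gamma> (Cst (U s)) TypeS"
    using wf by (simp add: typ_U)
  then have "wfS Srt Ax Rl (Cst (U s) # \<Gamma>)"
    by (rule wf_cons) simp
  with U show ?thesis
    using A Eps by (auto intro: wf_ctx_has_type.t_prod)
next
  case (Dot s1 s2)
  with c ps show ?thesis
    by (auto simp: pts_spec_def split: if_splits intro: typ_U[OF wf])
next
  case (PiC s1 s2 s3)
  with c ps show ?thesis
    by (auto simp: pts_spec_def split: if_splits intro!: typ_PiC_decl[OF wf])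
qed

fun ctx_insert :: "nat \<Rightarrow> 'c trm \<Rightarrow> 'c trm list \<Rightarrow> 'c trm list" where
  "ctx_insert 0 C \<Gamma> = C # \<Gamma>"
| "ctx_insert (Suc k) C [] = [C]"
| "ctx_insert (Suc k) C (A # \<Gamma>) = lift k A # ctx_insert k C \<Gamma>"

lemma length_ctx_insert: "k \<le> length \<Gamma> \<Longrightarrow> length (ctx_insert k C \<Gamma>) = Suc (length \<Gamma>)"
  by (induct k C \<Gamma> rule: ctx_insert.induct) auto

lemma nth_ctx_insert_less:
  "k \<le> length \<Gamma> \<Longrightarrow> i < k \<Longrightarrow> ctx_insert k C \<Gamma> ! i = lift (k - Suc i) (\<Gamma> ! i)"
  by (induct k C \<Gamma> arbitrary: i rule: ctx_insert.induct) (auto simp: nth_Cons split: nat.split)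

lemma nth_ctx_insert_ge:
  "k \<le> length \<Gamma> \<Longrightarrow> k \<le> i \<Longrightarrow> ctx_insert k C \<Gamma> ! Suc i = \<Gamma> ! i"
  by (induct k C \<Gamma> arbitrary: i rule: ctx_insert.induct) (auto simp: nth_Cons split: nat.split)

lemma weakening_Var:
  assumes wf: "wfS Srt Ax Rl (ctx_insert k C \<Gamma>)" and k: "k \<le> length \<Gamma>" and i: "i < length \<Gamma>"
  shows "typS Srt Ax Rl (ctx_insert k C \<Gamma>) (lift k (Var i)) (lift k (liftn (Suc i) (\<Gamma> ! i)))"
proof (cases "i < k")
  case True
  then have "lift k (liftn (Suc i) (\<Gamma> ! i)) = liftn (Suc i) (lift (k - Suc i) (\<Gamma> ! i))"
    using lift_liftn[of "k - Suc i" "Suc i"] by simp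
  moreover have "typS Srt Ax Rl (ctx_insert k C \<Gamma>) (Var i) (liftn (Suc i) (ctx_insert k C \<Gamma> ! i))"
    using wf True k length_ctx_insert[OF k] by (intro wf_ctx_has_type.t_var) auto
  ultimately show ?thesis
    using True k by (simp add: nth_ctx_insert_less)
next
  case False
  then have "lift k (liftn (Suc i) (\<Gamma> ! i)) = liftn (Suc (Suc i)) (\<Gamma> ! i)"
    by (intro lift_liftn_le) simp
  moreover have "typS Srt Ax Rl (ctx_insert k C \<Gamma>) (Var (Suc i))
      (liftn (Suc (Suc i)) (ctx_insert k C \<Gamma> ! Suc i))"
    using wf i length_ctx_insert[OF k] by (intro wf_ctx_has_type.t_var) auto
  ultimately show ?thesis
    using False k by (simp add: nth_ctx_insert_ge)
qed

lemma weakening: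
  "typS Srt Ax Rl \<Gamma> M A \<Longrightarrow> k \<le> length \<Gamma> \<Longrightarrow> wfS Srt Ax Rl (ctx_insert k C \<Gamma>) \<Longrightarrow>
   typS Srt Ax Rl (ctx_insert k C \<Gamma>) (lift k M) (lift k A)"
proof (induct arbitrary: k rule: wf_ctx_has_type.inducts(2)[where ?P1.0="\<lambda>_. True"])
  case (t_var \<Gamma> i)
  then show ?case by (intro weakening_Var) auto
next
  case (t_cst \<Gamma> c A)
  then show ?case
    using sig_closed[OF t_cst(3)] by (auto intro: wf_ctx_has_type.t_cst)
next
  case (t_prod \<Gamma> A B s)
  have A: "typS Srt Ax Rl (ctx_insert k C \<Gamma>) (lift k A) TypeS"
    using t_prod by simp
  then have "wfS Srt Ax Rl (ctx_insert (Suc k) C (A # \<Gamma>))"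
    by (auto intro: wf_cons)
  then have "typS Srt Ax Rl (ctx_insert (Suc k) C (A # \<Gamma>)) (lift (Suc k) B) (lift (Suc k) s)"
    using t_prod(6) by (intro t_prod(4)) simp_all
  then have "typS Srt Ax Rl (lift k A # ctx_insert k C \<Gamma>) (lift (Suc k) B) s"
    using t_prod(5) by simp
  with A t_prod(5) show ?case
    by (auto intro: wf_ctx_has_type.t_prod)
next
  case (t_lam \<Gamma> A B s M)
  have P: "typS Srt Ax Rl (ctx_insert k C \<Gamma>) (Prod (lift k A) (lift (Suc k) B)) s"
    using t_lam by simp
  then have "wfS Srt Ax Rl (ctx_insert (Suc k) C (A # \<Gamma>))"
    by (auto dest!: typ_ProdE intro: wf_cons)
  then have "typS Srt Ax Rl (ctx_insert (Suc k) C (A # \<Gamma>)) (lift (Suc k) M) (lift (Suc k) B)"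
    using t_lam(6) by (intro t_lam(5)) simp_all
  then have "typS Srt Ax Rl (lift k A # ctx_insert k C \<Gamma>) (lift (Suc k) M) (lift (Suc k) B)"
    by simp
  with P t_lam(3) show ?case
    by (auto intro: wf_ctx_has_type.t_lam)
next
  case (t_app \<Gamma> M A B N)
  then have "typS Srt Ax Rl (ctx_insert k C \<Gamma>) (App (lift k M) (lift k N))
      (subst (lift (Suc k) B) 0 (lift k N))"
    by (intro wf_ctx_has_type.t_app) auto
  then show ?case by simp
next
  case (t_conv \<Gamma> M A B s)
  then show ?case by (auto intro: wf_ctx_has_type.t_conv conv_lift)
qed (auto intro: wf_ctx_has_type.intros)

lemma weakening_Cons:
  "typS Srt Ax Rl \<Gamma> M A \<Longrightarrow> typS Srt Ax Rl \<Gamma> C s \<Longrightarrow> is_sort s \<Longrightarrow>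
   typS Srt Ax Rl (C # \<Gamma>) (lift 0 M) (lift 0 A)"
  using weakening[of Srt Ax Rl \<Gamma> M A 0 C] by (auto intro: wf_cons)

lemma wf_append_drop: "wfS Srt Ax Rl (\<Delta> @ \<Gamma>) \<Longrightarrow> wfS Srt Ax Rl \<Gamma>"
  by (induct \<Delta>) (auto dest: wf_ConsE typ_wf)

lemma weakening_append:
  "wfS Srt Ax Rl (\<Delta> @ \<Gamma>) \<Longrightarrow> typS Srt Ax Rl \<Gamma> M A \<Longrightarrow>
   typS Srt Ax Rl (\<Delta> @ \<Gamma>) (liftn (length \<Delta>) M) (liftn (length \<Delta>) A)"
proof (induct \<Delta>)
  case (Cons D \<Delta>)
  then obtain s where "is_sort s" "typS Srt Ax Rl (\<Delta> @ \<Gamma>) D s"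
    by (auto dest: wf_ConsE)
  with Cons show ?case
    by (auto simp: liftn_Suc intro: weakening_Cons dest: typ_wf)
qed simp

lemma wf_nth_typed:
  assumes "wfS Srt Ax Rl \<Gamma>" and "i < length \<Gamma>"
  obtains s where "is_sort s" and "typS Srt Ax Rl (drop (Suc i) \<Gamma>) (\<Gamma> ! i) s"
proof -
  have "wfS Srt Ax Rl (\<Gamma> ! i # drop (Suc i) \<Gamma>)"
    using assms wf_append_drop[of _ _ _ "take i \<Gamma>" "drop i \<Gamma>"] by (simp add: Cons_nth_drop_Suc)
  then show ?thesis
    using that by (auto dest: wf_ConsE)
qed

lemma weakening_nth:
  assumes "wfS Srt Ax Rl \<Gamma>" and "i < length \<Gamma>" and "typS Srt Ax Rl (drop (Suc i) \<Gamma>) (\<Gamma> ! i) s"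
  shows "typS Srt Ax Rl \<Gamma> (liftn (Suc i) (\<Gamma> ! i)) (liftn (Suc i) s)"
  using weakening_append[of Srt Ax Rl "take (Suc i) \<Gamma>" "drop (Suc i) \<Gamma>"] assms by simp

fun ctx_subst :: "nat \<Rightarrow> 'c trm \<Rightarrow> 'c trm list \<Rightarrow> 'c trm list" where
  "ctx_subst 0 N (A # \<Gamma>) = \<Gamma>"
| "ctx_subst (Suc k) N (A # \<Gamma>) = subst A k (liftn k N) # ctx_subst k N \<Gamma>"
| "ctx_subst k N [] = []"

lemma length_ctx_subst: "k < length \<Gamma> \<Longrightarrow> length (ctx_subst k N \<Gamma>) = length \<Gamma> - 1"
  by (induct k N \<Gamma> rule: ctx_subst.induct) auto

lemma nth_ctx_subst_less:
  "k < length \<Gamma> \<Longrightarrow> i < k \<Longrightarrow>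
   ctx_subst k N \<Gamma> ! i = subst (\<Gamma> ! i) (k - Suc i) (liftn (k - Suc i) N)"
  by (induct k N \<Gamma> arbitrary: i rule: ctx_subst.induct) (auto simp: nth_Cons split: nat.split)

lemma nth_ctx_subst_ge: "k < length \<Gamma> \<Longrightarrow> k \<le> i \<Longrightarrow> ctx_subst k N \<Gamma> ! i = \<Gamma> ! Suc i"
  by (induct k N \<Gamma> arbitrary: i rule: ctx_subst.induct) (auto simp: nth_Cons split: nat.split)

lemma ctx_subst_eq_append:
  "k < length \<Gamma> \<Longrightarrow> \<exists>\<Delta>. ctx_subst k N \<Gamma> = \<Delta> @ drop (Suc k) \<Gamma> \<and> length \<Delta> = k"
proof (induct k N \<Gamma> rule: ctx_subst.induct)
  case (2 k N A \<Gamma>)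
  then show ?case
    by (fastforce intro: exI[of _ "subst A k (liftn k N) # _"])
qed auto

lemma substitution_Var:
  assumes wf: "wfS Srt Ax Rl (ctx_subst k N \<Gamma>)" and i: "i < length \<Gamma>" and k: "k < length \<Gamma>"
    and N: "typS Srt Ax Rl (drop (Suc k) \<Gamma>) N (\<Gamma> ! k)"
  shows "typS Srt Ax Rl (ctx_subst k N \<Gamma>) (subst (Var i) k (liftn k N))
    (subst (liftn (Suc i) (\<Gamma> ! i)) k (liftn k N))"
proof -
  consider "i < k" | "i = k" | "k < i" by arith
  then show ?thesis
  proof cases
    case 1
    then have "subst (liftn (Suc i) (\<Gamma> ! i)) k (liftn k N)
        = liftn (Suc i) (subst (\<Gamma> ! i) (k - Suc i) (liftn (k - Suc i) N))"
      using subst_liftn[of "Suc i" _ "k - Suc i"] by simp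
    moreover have "typS Srt Ax Rl (ctx_subst k N \<Gamma>) (Var i) (liftn (Suc i) (ctx_subst k N \<Gamma> ! i))"
      using wf i k 1 by (intro wf_ctx_has_type.t_var) (auto simp: length_ctx_subst)
    ultimately show ?thesis
      using 1 k by (simp add: nth_ctx_subst_less)
  next
    case 2
    obtain \<Delta> where \<Delta>: "ctx_subst k N \<Gamma> = \<Delta> @ drop (Suc k) \<Gamma>" "length \<Delta> = k"
      using ctx_subst_eq_append[OF k] by blast
    have "typS Srt Ax Rl (ctx_subst k N \<Gamma>) (liftn k N) (liftn k (\<Gamma> ! k))"
      using weakening_append[of Srt Ax Rl \<Delta> "drop (Suc k) \<Gamma>" N "\<Gamma> ! k"] \<Delta> wf N by simp
    moreover have "liftn (Suc k) (\<Gamma> ! k) = lift k (liftn k (\<Gamma> ! k))"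
      by (simp add: lift_liftn_le)
    ultimately show ?thesis
      using 2 by simp
  next
    case 3
    have "typS Srt Ax Rl (ctx_subst k N \<Gamma>) (Var (i - 1)) (liftn (Suc (i - 1)) (ctx_subst k N \<Gamma> ! (i - 1)))"
      using wf i k 3 by (intro wf_ctx_has_type.t_var) (auto simp: length_ctx_subst)
    moreover have "liftn (Suc i) (\<Gamma> ! i) = lift k (liftn i (\<Gamma> ! i))"
      using 3 by (simp add: lift_liftn_le)
    ultimately show ?thesis
      using 3 k by (simp add: nth_ctx_subst_ge)
  qed
qed

lemma substitution:
  "typS Srt Ax Rl \<Gamma> M B \<Longrightarrow> k < length \<Gamma> \<Longrightarrow> typS Srt Ax Rl (drop (Suc k) \<Gamma>) N (\<Gamma> ! k) \<Longrightarrow>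
   wfS Srt Ax Rl (ctx_subst k N \<Gamma>) \<Longrightarrow>
   typS Srt Ax Rl (ctx_subst k N \<Gamma>) (subst M k (liftn k N)) (subst B k (liftn k N))"
proof (induct arbitrary: k rule: wf_ctx_has_type.inducts(2)[where ?P1.0="\<lambda>_. True"])
  case (t_var \<Gamma> i)
  then show ?case by (intro substitution_Var)
next
  case (t_cst \<Gamma> c A)
  then show ?case
    using sig_closed[OF t_cst(3)] by (auto intro: wf_ctx_has_type.t_cst)
next
  case (t_prod \<Gamma> A B s)
  have A: "typS Srt Ax Rl (ctx_subst k N \<Gamma>) (subst A k (liftn k N)) TypeS"
    using t_prod by simp
  then have "wfS Srt Ax Rl (ctx_subst (Suc k) N (A # \<Gamma>))"
    by (auto intro: wf_cons)
  then have "typS Srt Ax Rl (ctx_subst (Suc k) N (A # \<Gamma>))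
      (subst B (Suc k) (liftn (Suc k) N)) (subst s (Suc k) (liftn (Suc k) N))"
    using t_prod(6,7) by (intro t_prod(4)) simp_all
  then have "typS Srt Ax Rl (subst A k (liftn k N) # ctx_subst k N \<Gamma>)
      (subst B (Suc k) (lift 0 (liftn k N))) s"
    using t_prod(5) by (simp add: liftn_Suc)
  with A t_prod(5) show ?case
    by (auto intro: wf_ctx_has_type.t_prod)
next
  case (t_lam \<Gamma> A B s M)
  have P: "typS Srt Ax Rl (ctx_subst k N \<Gamma>)
      (Prod (subst A k (liftn k N)) (subst B (Suc k) (lift 0 (liftn k N)))) s"
    using t_lam by simp
  then have "wfS Srt Ax Rl (ctx_subst (Suc k) N (A # \<Gamma>))"
    by (auto dest!: typ_ProdE intro: wf_cons)
  then have "typS Srt Ax Rl (ctx_subst (Suc k) N (A # \<Gamma>))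
      (subst M (Suc k) (liftn (Suc k) N)) (subst B (Suc k) (liftn (Suc k) N))"
    using t_lam(6,7) by (intro t_lam(5)) simp_all
  then have "typS Srt Ax Rl (subst A k (liftn k N) # ctx_subst k N \<Gamma>)
      (subst M (Suc k) (lift 0 (liftn k N))) (subst B (Suc k) (lift 0 (liftn k N)))"
    by (simp add: liftn_Suc)
  with P t_lam(3) show ?case
    by (auto intro: wf_ctx_has_type.t_lam)
next
  case (t_app \<Gamma> M A B L)
  then have "typS Srt Ax Rl (ctx_subst k N \<Gamma>) (App (subst M k (liftn k N)) (subst L k (liftn k N)))
      (subst (subst B (Suc k) (lift 0 (liftn k N))) 0 (subst L k (liftn k N)))"
    by (intro wf_ctx_has_type.t_app) auto
  then show ?case
    using subst_subst[of 0 k B "liftn k N" L] by simp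
next
  case (t_conv \<Gamma> M A B s)
  then show ?case by (auto intro: wf_ctx_has_type.t_conv conv_subst)
qed (auto intro: wf_ctx_has_type.intros)

lemma substitution_0:
  "typS Srt Ax Rl (A # \<Gamma>) M B \<Longrightarrow> typS Srt Ax Rl \<Gamma> N A \<Longrightarrow>
   typS Srt Ax Rl \<Gamma> (subst M 0 N) (subst B 0 N)"
  using substitution[of Srt Ax Rl "A # \<Gamma>" M B 0 N] typ_wf[of Srt Ax Rl \<Gamma> N A] by simp

section \<open>Subject reduction and uniqueness of types\<close>

lemma typ_Prod_subst_codomain:
  assumes "typS Srt Ax Rl \<Gamma> (Prod A B) s" and N: "typS Srt Ax Rl \<Gamma> N A"
  shows "\<exists>s. is_sort s \<and> typS Srt Ax Rl \<Gamma> (subst B 0 N) s"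
proof -
  obtain s' where B: "typS Srt Ax Rl (A # \<Gamma>) B s'" and "is_sort s'"
    using typ_ProdE[OF assms(1)] by blast
  moreover have "typS Srt Ax Rl \<Gamma> (subst B 0 N) (subst s' 0 N)"
    using B N by (rule substitution_0)
  ultimately show ?thesis
    by auto
qed

lemma type_correctness:
  assumes ps: "pts_spec Srt Ax Rl"
  shows "typS Srt Ax Rl \<Gamma> M A \<Longrightarrow> A = KindS \<or> (\<exists>s. is_sort s \<and> typS Srt Ax Rl \<Gamma> A s)"
proof (induct rule: wf_ctx_has_type.inducts(2)[where ?P1.0="\<lambda>_. True"])
  case (t_var \<Gamma> i)
  then show ?case
    by (metis wf_nth_typed weakening_nth sort_liftn)
next
  case (t_cst \<Gamma> c A)
  then show ?case
    using sig_decl_typed[OF ps] by (metis is_sort_KindS is_sort_TypeS)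
next
  case (t_prod \<Gamma> A B s)
  then show ?case
    by (auto simp: is_sort_def dest: typ_wf)
next
  case (t_app \<Gamma> M A B N)
  then show ?case
    by (auto intro: typ_Prod_subst_codomain)
qed auto

lemma typ_subst_codomain:
  assumes ps: "pts_spec Srt Ax Rl"
    and M: "typS Srt Ax Rl \<Gamma> M (Prod A B)" and N: "typS Srt Ax Rl \<Gamma> N A"
  shows "\<exists>s. is_sort s \<and> typS Srt Ax Rl \<Gamma> (subst B 0 N) s"
  using type_correctness[OF ps M] N by (auto intro: typ_Prod_subst_codomain)

lemma ctx_conv_Cons:
  assumes M: "typS Srt Ax Rl (A # \<Gamma>) M B" and A': "typS Srt Ax Rl \<Gamma> A' s'" "is_sort s'"
    and conv: "convS Ax Rl A A'"
  shows "typS Srt Ax Rl (A' # \<Gamma>) M B"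
proof -
  obtain s where s: "is_sort s" "typS Srt Ax Rl \<Gamma> A s"
    using wf_ConsE typ_wf[OF M] by blast
  have wf: "wfS Srt Ax Rl (A' # \<Gamma>)"
    using A' by (rule wf_cons)
  have lift_A: "typS Srt Ax Rl (A' # \<Gamma>) (lift 0 A) s"
    using weakening_Cons[OF s(2) A'] s by simp
  have "typS Srt Ax Rl (ctx_insert 1 A' (A # \<Gamma>)) (lift 1 M) (lift 1 B)"
    using lift_A s by (intro weakening[OF M]) (simp_all add: wf_cons)
  moreover have "typS Srt Ax Rl (A' # \<Gamma>) (Var 0) (lift 0 A)"
    using typ_Var0[OF wf] lift_A s(1) conv_lift[OF conv_betaR_sym[OF conv]]
    by (rule wf_ctx_has_type.t_conv)
  ultimately have "typS Srt Ax Rl (A' # \<Gamma>) (subst (lift 1 M) 0 (Var 0)) (subst (lift 1 B) 0 (Var 0))"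
    by (simp add: substitution_0)
  then show ?thesis
    by (simp add: subst_lift_Var)
qed

lemma typ_Eps_codomain:
  assumes "typS Srt Ax Rl \<Gamma> (Cst (Eps s)) (Prod A B)"
  shows "convS Ax Rl TypeS (subst B 0 N)"
proof -
  obtain T where "sigS Srt Ax Rl (Eps s) = Some T" "convS Ax Rl T (Prod A B)"
    using typ_CstE[OF assms] by blast
  then have "convS Ax Rl (Prod (Cst (U s)) TypeS) (Prod A B)"
    by (simp split: if_splits)
  then have "convS Ax Rl TypeS B"
    by (rule conv_ProdD(2))
  then show ?thesis
    using conv_subst[of Ax Rl TypeS B 0 N] by simp
qed

lemma typ_RS_rl_contractum:
  assumes ps: "pts_spec Srt Ax Rl" and rl: "(s1, s2, s3) \<in> Rl"
    and PiC_typ: "typS Srt Ax Rl \<Gamma> (App (App (Cst (PiC s1 s2 s3)) A) B) C"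
  shows "typS Srt Ax Rl \<Gamma>
    (Prod (App (Cst (Eps s1)) A) (App (Cst (Eps s2)) (App (lift 0 B) (Var 0)))) TypeS"
proof -
  let ?EA = "App (Cst (Eps s1)) A"
  have S: "s1 \<in> Srt" "s2 \<in> Srt"
    using ps rl unfolding pts_spec_def by blast+
  have wf: "wfS Srt Ax Rl \<Gamma>"
    using typ_wf[OF PiC_typ] .
  obtain A2 B2 where AB2: "typS Srt Ax Rl \<Gamma> (App (Cst (PiC s1 s2 s3)) A) (Prod A2 B2)"
    "typS Srt Ax Rl \<Gamma> B A2"
    using typ_AppE[OF PiC_typ] by blast
  obtain A3 B3 where AB3: "typS Srt Ax Rl \<Gamma> (Cst (PiC s1 s2 s3)) (Prod A3 B3)"
    "typS Srt Ax Rl \<Gamma> A A3" "convS Ax Rl (subst B3 0 A) (Prod A2 B2)"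
    using typ_AppE[OF AB2(1)] by blast
  obtain T where "sigS Srt Ax Rl (PiC s1 s2 s3) = Some T" "convS Ax Rl T (Prod A3 B3)"
    using typ_CstE[OF AB3(1)] by blast
  then have "convS Ax Rl (Prod (Cst (U s1))
      (Prod (Prod (App (Cst (Eps s1)) (Var 0)) (Cst (U s2))) (Cst (U s3)))) (Prod A3 B3)"
    by (simp split: if_splits)
  note c3 = conv_ProdD[OF this]
  have "convS Ax Rl (Prod (Prod ?EA (Cst (U s2))) (Cst (U s3))) (Prod A2 B2)"
    using conv_betaR_trans[OF conv_subst[OF c3(2), of 0 A] AB3(3)] by simp
  then have c2: "convS Ax Rl (Prod ?EA (Cst (U s2))) A2"
    by (rule conv_ProdD)
  have A: "typS Srt Ax Rl \<Gamma> A (Cst (U s1))"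
    using AB3(2) typ_U[OF wf S(1)] is_sort_TypeS conv_betaR_sym[OF c3(1)]
    by (rule wf_ctx_has_type.t_conv)
  have EA: "typS Srt Ax Rl \<Gamma> ?EA TypeS"
    using wf_ctx_has_type.t_app[OF typ_Eps[OF wf S(1)] A] by simp
  then have wf1: "wfS Srt Ax Rl (?EA # \<Gamma>)"
    by (rule wf_cons) simp
  have "typS Srt Ax Rl \<Gamma> (Prod ?EA (Cst (U s2))) TypeS"
    using EA typ_U[OF wf1 S(2)] is_sort_TypeS by (rule wf_ctx_has_type.t_prod)
  with AB2(2) have "typS Srt Ax Rl \<Gamma> B (Prod ?EA (Cst (U s2)))"
    using is_sort_TypeS conv_betaR_sym[OF c2] by (rule wf_ctx_has_type.t_conv)
  then have "typS Srt Ax Rl (?EA # \<Gamma>) (lift 0 B) (Prod (lift 0 ?EA) (Cst (U s2)))"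
    using weakening_Cons[OF _ EA is_sort_TypeS] by fastforce
  then have "typS Srt Ax Rl (?EA # \<Gamma>) (App (lift 0 B) (Var 0)) (Cst (U s2))"
    using wf_ctx_has_type.t_app[OF _ typ_Var0[OF wf1]] by fastforce
  then have "typS Srt Ax Rl (?EA # \<Gamma>) (App (Cst (Eps s2)) (App (lift 0 B) (Var 0))) TypeS"
    using wf_ctx_has_type.t_app[OF typ_Eps[OF wf1 S(2)]] by fastforce
  with EA show ?thesis
    by (auto intro: wf_ctx_has_type.t_prod)
qed

lemma subject_reduction_root:
  assumes ps: "pts_spec Srt Ax Rl"
    and M: "typS Srt Ax Rl \<Gamma> M (Prod A B)" and N: "typS Srt Ax Rl \<Gamma> N A"
    and step: "beta_root (App M N) X \<or> RS Ax Rl (App M N) X"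
  shows "typS Srt Ax Rl \<Gamma> X (subst B 0 N)"
proof -
  obtain s where s: "is_sort s" "typS Srt Ax Rl \<Gamma> (subst B 0 N) s"
    using typ_subst_codomain[OF ps M N] by blast
  from step show ?thesis
  proof (elim disjE)
    assume "beta_root (App M N) X"
    then obtain A0 M0 where M0: "M = Lam A0 M0" "X = subst M0 0 N"
      by (auto elim: beta_rootE)
    obtain B0 s0 where L: "typS Srt Ax Rl \<Gamma> (Prod A0 B0) s0" "typS Srt Ax Rl (A0 # \<Gamma>) M0 B0"
      "convS Ax Rl (Prod A0 B0) (Prod A B)"
      using typ_LamE[OF M[unfolded M0(1)]] by blast
    obtain s1 where "typS Srt Ax Rl \<Gamma> A0 TypeS"
      using typ_ProdE[OF L(1)] by blast
    with N have "typS Srt Ax Rl \<Gamma> N A0"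
      using is_sort_TypeS conv_betaR_sym[OF conv_ProdD(1)[OF L(3)]]
      by (rule wf_ctx_has_type.t_conv)
    then have "typS Srt Ax Rl \<Gamma> X (subst B0 0 N)"
      using substitution_0[OF L(2)] M0(2) by simp
    then show ?thesis
      using s(2,1) conv_subst[OF conv_ProdD(2)[OF L(3)]] by (rule wf_ctx_has_type.t_conv)
  next
    assume "RS Ax Rl (App M N) X"
    then have "typS Srt Ax Rl \<Gamma> X TypeS \<and> (\<exists>s'. M = Cst (Eps s'))"
    proof (cases rule: RS.cases)
      case (r_ax s1 s2)
      then show ?thesis
        using ps typ_wf[OF M] by (auto simp: pts_spec_def intro: typ_U)
    next
      case (r_rl s1 s2 s3 A1 B1)
      then show ?thesis
        using typ_RS_rl_contractum[OF ps _ N[unfolded r_rl(2)]] by simp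
    qed
    then show ?thesis
      using s(2,1) M typ_Eps_codomain by (metis wf_ctx_has_type.t_conv)
  qed
qed

lemma typ_Lam_red_domain:
  assumes P': "typS Srt Ax Rl \<Gamma> (Prod A' B) s" and P: "typS Srt Ax Rl \<Gamma> (Prod A B) s"
    and s: "is_sort s" and M: "typS Srt Ax Rl (A # \<Gamma>) M B" and red: "redS Ax Rl A A'"
  shows "typS Srt Ax Rl \<Gamma> (Lam A' M) (Prod A B)"
proof -
  obtain s' where "typS Srt Ax Rl \<Gamma> A' TypeS"
    using typ_ProdE[OF P'] by blast
  with M have "typS Srt Ax Rl (A' # \<Gamma>) M B"
    using is_sort_TypeS red_conv_betaR[OF red] by (rule ctx_conv_Cons)
  with P' s have "typS Srt Ax Rl \<Gamma> (Lam A' M) (Prod A' B)"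
    by (rule wf_ctx_has_type.t_lam)
  moreover have "convS Ax Rl (Prod A' B) (Prod A B)"
    using red by (simp add: conv_betaR_ProdL conv_betaR_sym red_conv_betaR)
  ultimately show ?thesis
    by (rule wf_ctx_has_type.t_conv[OF _ P s])
qed

lemma typ_App_red_arg:
  assumes ps: "pts_spec Srt Ax Rl" and M: "typS Srt Ax Rl \<Gamma> M (Prod A B)"
    and N: "typS Srt Ax Rl \<Gamma> N A" and N': "typS Srt Ax Rl \<Gamma> N' A" and red: "redS Ax Rl N N'"
  shows "typS Srt Ax Rl \<Gamma> (App M N') (subst B 0 N)"
proof -
  obtain s where "is_sort s" "typS Srt Ax Rl \<Gamma> (subst B 0 N) s"
    using typ_subst_codomain[OF ps M N] by blast
  moreover have "typS Srt Ax Rl \<Gamma> (App M N') (subst B 0 N')"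
    using M N' by (rule wf_ctx_has_type.t_app)
  moreover have "convS Ax Rl (subst B 0 N') (subst B 0 N)"
    using red by (simp add: conv_subst_arg conv_betaR_sym red_conv_betaR)
  ultimately show ?thesis
    by (auto intro: wf_ctx_has_type.t_conv)
qed

theorem subject_reduction:
  assumes ps: "pts_spec Srt Ax Rl"
  shows "typS Srt Ax Rl \<Gamma> M C \<Longrightarrow> redS Ax Rl M M' \<Longrightarrow> typS Srt Ax Rl \<Gamma> M' C"
proof (induct arbitrary: M' rule: wf_ctx_has_type.inducts(2)[where ?P1.0="\<lambda>_. True"])
  case (t_prod \<Gamma> A B s)
  from red_cases_Prod[OF t_prod(6)] show ?case
  proof (elim disjE exE conjE)
    fix A' assume A': "M' = Prod A' B" "redS Ax Rl A A'"
    then have "typS Srt Ax Rl \<Gamma> A' TypeS"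
      using t_prod(2) by blast
    moreover from this have "typS Srt Ax Rl (A' # \<Gamma>) B s"
      using t_prod(3) is_sort_TypeS red_conv_betaR[OF A'(2)] by (blast intro: ctx_conv_Cons)
    ultimately show ?thesis
      using t_prod(5) A'(1) by (auto intro: wf_ctx_has_type.t_prod)
  next
    fix B' assume "M' = Prod A B'" "redS Ax Rl B B'"
    then show ?thesis
      using t_prod by (auto intro: wf_ctx_has_type.t_prod)
  qed
next
  case (t_lam \<Gamma> A B s M)
  from red_cases_Lam[OF t_lam(6)] show ?case
  proof (elim disjE exE conjE)
    fix A' assume "M' = Lam A' M" "redS Ax Rl A A'"
    then show ?thesis
      using t_lam by (auto intro: typ_Lam_red_domain ctxclos.prodL)
  next
    fix M2 assume "M' = Lam A M2" "redS Ax Rl M M2"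
    then show ?thesis
      using t_lam by (auto intro: wf_ctx_has_type.t_lam)
  qed
next
  case (t_app \<Gamma> M A B N)
  from red_cases_App[OF t_app(5)] show ?case
  proof (elim disjE exE conjE)
    fix M2 assume "M' = App M2 N" "redS Ax Rl M M2"
    then show ?thesis
      using t_app by (auto intro: wf_ctx_has_type.t_app)
  next
    fix N2 assume "M' = App M N2" "redS Ax Rl N N2"
    then show ?thesis
      using t_app by (auto intro: typ_App_red_arg[OF ps])
  qed (use subject_reduction_root[OF ps t_app(1,3)] in blast)+
next
  case (t_conv \<Gamma> M A B s)
  then show ?case by (auto intro: wf_ctx_has_type.t_conv)
qed (auto elim!: ctxclos_TypeSE ctxclos_VarE ctxclos_CstE beta_rootE RSE)

corollary subject_reduction_reds:
  assumes "pts_spec Srt Ax Rl" and "redsS Ax Rl M M'" and "typS Srt Ax Rl \<Gamma> M C"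
  shows "typS Srt Ax Rl \<Gamma> M' C"
  using assms(2,3) by (induct rule: rtranclp_induct) (auto intro: subject_reduction[OF assms(1)])

theorem uniqueness_of_types:
  "typS Srt Ax Rl \<Gamma> M A \<Longrightarrow> typS Srt Ax Rl \<Gamma> M B \<Longrightarrow> convS Ax Rl A B"
proof (induct arbitrary: B rule: wf_ctx_has_type.inducts(2)[where ?P1.0="\<lambda>_. True"])
  case (t_ax \<Gamma> C)
  then show ?case by (blast intro: typ_TypeSE)
next
  case (t_var \<Gamma> i C)
  then show ?case by (blast dest: typ_VarE)
next
  case (t_cst \<Gamma> c A C)
  then show ?case by (auto dest: typ_CstE)
next
  case (t_prod \<Gamma> A B s C)
  then obtain s' where "typS Srt Ax Rl (A # \<Gamma>) B s'" "convS Ax Rl s' C"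
    by (blast dest: typ_ProdE)
  with t_prod(4) show ?case
    by (blast intro: conv_betaR_trans)
next
  case (t_lam \<Gamma> A B s M C)
  then obtain B' where "typS Srt Ax Rl (A # \<Gamma>) M B'" "convS Ax Rl (Prod A B') C"
    by (blast dest: typ_LamE)
  with t_lam(5) show ?case
    by (blast intro: conv_betaR_trans conv_betaR_ProdR)
next
  case (t_app \<Gamma> M A B N C)
  then obtain A' B' where "typS Srt Ax Rl \<Gamma> M (Prod A' B')" "convS Ax Rl (subst B' 0 N) C"
    by (blast dest: typ_AppE)
  with t_app(2) show ?case
    by (blast intro: conv_betaR_trans conv_subst dest: conv_ProdD(2))
next
  case (t_conv \<Gamma> M A B s C)
  then show ?case
    by (blast intro: conv_betaR_trans conv_betaR_sym)
qed simp_all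

lemma not_typ_TypeS_and_KindS: "typS Srt Ax Rl \<Gamma> X TypeS \<Longrightarrow> \<not> typS Srt Ax Rl \<Gamma> X KindS"
  using uniqueness_of_types not_conv_TypeS_KindS by blast

lemma TypeS_not_typ_TypeS: "\<not> typS Srt Ax Rl \<Gamma> TypeS TypeS"
  using not_typ_TypeS_and_KindS typ_wf typ_TypeS_KindS by blast

lemma not_conv_type_kind:
  assumes ps: "pts_spec Srt Ax Rl"
    and X: "typS Srt Ax Rl \<Gamma> X TypeS" and Y: "typS Srt Ax Rl \<Gamma> Y KindS"
  shows "\<not> convS Ax Rl X Y"
proof
  assume "convS Ax Rl X Y"
  then obtain P where "redsS Ax Rl X P" "redsS Ax Rl Y P"
    using church_rosser by blast
  then show False
    using subject_reduction_reds[OF ps] X Y not_typ_TypeS_and_KindS by blast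
qed

section \<open>Syntactic levels\<close>

datatype level = Knd | Fam | Obj

text \<open>\<open>L ! i\<close> records whether the variable \<open>Var i\<close> is a type-family variable, i.e.\ whether its
  declared type is a kind.\<close>

fun level_of :: "bool list \<Rightarrow> 's cst trm \<Rightarrow> level" where
  "level_of L TypeS = Knd"
| "level_of L KindS = Knd"
| "level_of L (Var i) = (if i < length L \<and> L ! i then Fam else Obj)"
| "level_of L (Cst c) = (if is_family_cst c then Fam else Obj)"
| "level_of L (App M N) = level_of L M"
| "level_of L (Lam A M) = level_of ((level_of L A = Knd) # L) M"
| "level_of L (Prod A B) = (if level_of ((level_of L A = Knd) # L) B = Knd then Knd else Fam)"

fun ctx_fams :: "'s cst trm list \<Rightarrow> bool list" where
  "ctx_fams [] = []"
| "ctx_fams (A # \<Gamma>) = (level_of (ctx_fams \<Gamma>) A = Knd) # ctx_fams \<Gamma>"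

lemma length_ctx_fams [simp]: "length (ctx_fams \<Gamma>) = length \<Gamma>"
  by (induct \<Gamma>) auto

definition ctx_fams_correct :: "'s set \<Rightarrow> ('s \<times> 's) set \<Rightarrow> ('s \<times> 's \<times> 's) set \<Rightarrow> 's cst trm list \<Rightarrow> bool"
  where "ctx_fams_correct Srt Ax Rl \<Gamma> \<longleftrightarrow>
    (\<forall>i < length \<Gamma>. ctx_fams \<Gamma> ! i = typS Srt Ax Rl (drop (Suc i) \<Gamma>) (\<Gamma> ! i) KindS)"

definition level_correct ::
  "'s set \<Rightarrow> ('s \<times> 's) set \<Rightarrow> ('s \<times> 's \<times> 's) set \<Rightarrow> 's cst trm list \<Rightarrow> 's cst trm \<Rightarrow> 's cst trm \<Rightarrow> bool"
  where "level_correct Srt Ax Rl \<Gamma> M C \<longleftrightarrow>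
    (level_of (ctx_fams \<Gamma>) M = Knd \<and> C = KindS) \<or>
    (level_of (ctx_fams \<Gamma>) M = Fam \<and> typS Srt Ax Rl \<Gamma> C KindS) \<or>
    (level_of (ctx_fams \<Gamma>) M = Obj \<and> typS Srt Ax Rl \<Gamma> C TypeS)"

lemma level_correct_sort:
  assumes "level_correct Srt Ax Rl \<Gamma> A s" and "is_sort s"
  shows "(level_of (ctx_fams \<Gamma>) A = Knd \<and> s = KindS) \<or> (level_of (ctx_fams \<Gamma>) A = Fam \<and> s = TypeS)"
  using assms KindS_untyped TypeS_not_typ_TypeS unfolding level_correct_def is_sort_def by blast

lemma level_correct_KindS_iff:
  assumes "level_correct Srt Ax Rl \<Gamma> A s" and "is_sort s" and "typS Srt Ax Rl \<Gamma> A s"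
  shows "(level_of (ctx_fams \<Gamma>) A = Knd) = typS Srt Ax Rl \<Gamma> A KindS"
  using level_correct_sort[OF assms(1,2)] assms(3) by (auto dest: not_typ_TypeS_and_KindS)

lemma ctx_fams_correct_Cons:
  assumes "ctx_fams_correct Srt Ax Rl \<Gamma>"
    and "level_correct Srt Ax Rl \<Gamma> A s" and "is_sort s" and "typS Srt Ax Rl \<Gamma> A s"
  shows "ctx_fams_correct Srt Ax Rl (A # \<Gamma>)"
  using assms level_correct_KindS_iff[OF assms(2-4)]
  unfolding ctx_fams_correct_def by (auto simp: nth_Cons split: nat.split)

lemma level_correct_Var:
  assumes "ctx_fams_correct Srt Ax Rl \<Gamma>" and wf: "wfS Srt Ax Rl \<Gamma>" and i: "i < length \<Gamma>"
  shows "level_correct Srt Ax Rl \<Gamma> (Var i) (liftn (Suc i) (\<Gamma> ! i))"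
proof -
  obtain s where s: "is_sort s" "typS Srt Ax Rl (drop (Suc i) \<Gamma>) (\<Gamma> ! i) s"
    using wf_nth_typed[OF wf i] .
  have fam: "ctx_fams \<Gamma> ! i = typS Srt Ax Rl (drop (Suc i) \<Gamma>) (\<Gamma> ! i) KindS"
    using assms unfolding ctx_fams_correct_def by blast
  show ?thesis
  proof (cases "ctx_fams \<Gamma> ! i")
    case True
    with fam have "typS Srt Ax Rl \<Gamma> (liftn (Suc i) (\<Gamma> ! i)) KindS"
      using weakening_nth[OF wf i, of KindS] by simp
    with True show ?thesis
      using i by (simp add: level_correct_def)
  next
    case False
    with fam s have "typS Srt Ax Rl (drop (Suc i) \<Gamma>) (\<Gamma> ! i) TypeS"
      unfolding is_sort_def by auto
    then have "typS Srt Ax Rl \<Gamma> (liftn (Suc i) (\<Gamma> ! i)) (liftn (Suc i) TypeS)"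
      by (rule weakening_nth[OF wf i])
    with False show ?thesis
      using i by (simp add: level_correct_def)
  qed
qed

lemma level_correct_Prod:
  assumes "level_correct Srt Ax Rl (A # \<Gamma>) B s" and "is_sort s" and "wfS Srt Ax Rl \<Gamma>"
  shows "level_correct Srt Ax Rl \<Gamma> (Prod A B) s"
  using level_correct_sort[OF assms(1,2)] assms(3) by (auto simp: level_correct_def)

lemma level_correct_Lam:
  assumes M: "level_correct Srt Ax Rl (A # \<Gamma>) M B" and P: "typS Srt Ax Rl \<Gamma> (Prod A B) s"
  shows "level_correct Srt Ax Rl \<Gamma> (Lam A M) (Prod A B)"
proof -
  obtain s' where A: "typS Srt Ax Rl \<Gamma> A TypeS"
    using typ_ProdE[OF P] by blast
  have "B \<noteq> KindS"
    using typ_ProdE[OF P] KindS_untyped by blast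
  with M A show ?thesis
    by (auto simp: level_correct_def intro: wf_ctx_has_type.t_prod)
qed

lemma level_correct_App:
  assumes M: "level_correct Srt Ax Rl \<Gamma> M (Prod A B)" and N: "typS Srt Ax Rl \<Gamma> N A"
  shows "level_correct Srt Ax Rl \<Gamma> (App M N) (subst B 0 N)"
proof -
  have B_sort: "typS Srt Ax Rl (A # \<Gamma>) B s" if P: "typS Srt Ax Rl \<Gamma> (Prod A B) s" "is_sort s" for s
  proof -
    obtain s' where "typS Srt Ax Rl (A # \<Gamma>) B s'" "is_sort s'" "convS Ax Rl s' s"
      using typ_ProdE[OF P(1)] by blast
    then show ?thesis
      using conv_sorts_eq P(2) by blast
  qed
  show ?thesis
    using M substitution_0[OF B_sort N] by (auto simp: level_correct_def)
qed

lemma level_correct_conv: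
  assumes ps: "pts_spec Srt Ax Rl" and M: "level_correct Srt Ax Rl \<Gamma> M A"
    and B: "typS Srt Ax Rl \<Gamma> B s" "is_sort s" and conv: "convS Ax Rl A B"
  shows "level_correct Srt Ax Rl \<Gamma> M B"
proof -
  have "A \<noteq> KindS"
  proof
    assume "A = KindS"
    then have "redsS Ax Rl B KindS"
      using conv_atom_reds[OF conv] by blast
    then show False
      using subject_reduction_reds[OF ps _ B(1)] KindS_untyped by blast
  qed
  moreover have "s = KindS" if "typS Srt Ax Rl \<Gamma> A KindS"
    using not_conv_type_kind[OF ps _ that] conv B unfolding is_sort_def by (metis conv_betaR_sym)
  moreover have "s = TypeS" if "typS Srt Ax Rl \<Gamma> A TypeS"
    using not_conv_type_kind[OF ps that] conv B unfolding is_sort_def by metis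
  ultimately show ?thesis
    using M B unfolding level_correct_def by auto
qed

theorem level_correctness:
  assumes ps: "pts_spec Srt Ax Rl"
  shows "typS Srt Ax Rl \<Gamma> M C \<Longrightarrow> ctx_fams_correct Srt Ax Rl \<Gamma> \<and> level_correct Srt Ax Rl \<Gamma> M C"
proof (induct rule: wf_ctx_has_type.inducts(2)[where ?P1.0="ctx_fams_correct Srt Ax Rl"])
  case wf_nil
  then show ?case by (simp add: ctx_fams_correct_def)
next
  case (wf_cons \<Gamma> A s)
  then show ?case by (blast intro: ctx_fams_correct_Cons)
next
  case (t_ax \<Gamma>)
  then show ?case by (simp add: level_correct_def)
next
  case (t_var \<Gamma> i)
  then show ?case by (blast intro: level_correct_Var)
next
  case (t_cst \<Gamma> c A)
  then show ?case
    using sig_decl_typed[OF ps t_cst(1,3)] by (auto simp: level_correct_def)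
next
  case (t_prod \<Gamma> A B s)
  then show ?case by (blast intro: level_correct_Prod typ_wf)
next
  case (t_lam \<Gamma> A B s M)
  then show ?case by (blast intro: level_correct_Lam)
next
  case (t_app \<Gamma> M A B N)
  then show ?case by (blast intro: level_correct_App)
next
  case (t_conv \<Gamma> M A B s)
  then show ?case by (blast intro: level_correct_conv[OF ps])
qed

lemma level_of_type:
  "pts_spec Srt Ax Rl \<Longrightarrow> typS Srt Ax Rl \<Gamma> X TypeS \<Longrightarrow> level_of (ctx_fams \<Gamma>) X = Fam"
  using level_correctness TypeS_not_typ_TypeS unfolding level_correct_def by blast

lemma level_of_object:
  "pts_spec Srt Ax Rl \<Longrightarrow> typS Srt Ax Rl \<Gamma> N A \<Longrightarrow> typS Srt Ax Rl \<Gamma> A TypeS \<Longrightarrow>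
   level_of (ctx_fams \<Gamma>) N = Obj"
  using level_correctness KindS_untyped not_typ_TypeS_and_KindS unfolding level_correct_def by blast

lemma level_of_kind_level:
  "pts_spec Srt Ax Rl \<Longrightarrow> typS Srt Ax Rl \<Gamma> P C \<Longrightarrow> typS Srt Ax Rl \<Gamma> C KindS \<Longrightarrow>
   level_of (ctx_fams \<Gamma>) P = Fam"
  using level_correctness KindS_untyped not_typ_TypeS_and_KindS unfolding level_correct_def by blast

fun has_fam_redex :: "bool list \<Rightarrow> 's cst trm \<Rightarrow> bool" where
  "has_fam_redex L (App M N) =
     (((\<exists>B C. M = Lam B C) \<and> level_of L M = Fam) \<or> has_fam_redex L M \<or> has_fam_redex L N)"
| "has_fam_redex L (Lam A M) = (has_fam_redex L A \<or> has_fam_redex ((level_of L A = Knd) # L) M)"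
| "has_fam_redex L (Prod A B) = (has_fam_redex L A \<or> has_fam_redex ((level_of L A = Knd) # L) B)"
| "has_fam_redex L TypeS = False"
| "has_fam_redex L KindS = False"
| "has_fam_redex L (Var i) = False"
| "has_fam_redex L (Cst c) = False"

definition insert_at :: "nat \<Rightarrow> 'a \<Rightarrow> 'a list \<Rightarrow> 'a list" where
  "insert_at k x xs = take k xs @ x # drop k xs"

definition remove_at :: "nat \<Rightarrow> 'a list \<Rightarrow> 'a list" where
  "remove_at k xs = take k xs @ drop (Suc k) xs"

lemma insert_at_0 [simp]: "insert_at 0 x xs = x # xs"
  and insert_at_Suc [simp]: "insert_at (Suc k) x (y # xs) = y # insert_at k x xs"
  by (simp_all add: insert_at_def)

lemma remove_at_0 [simp]: "remove_at 0 (y # xs) = xs"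
  and remove_at_Suc [simp]: "remove_at (Suc k) (y # xs) = y # remove_at k xs"
  by (simp_all add: remove_at_def)

lemma level_of_lift: "k \<le> length L \<Longrightarrow> level_of (insert_at k b L) (lift k M) = level_of L M"
proof (induct M arbitrary: k L)
  case (Var i)
  then show ?case
    by (auto simp: insert_at_def nth_append Suc_diff_le)
next
  case (Lam A M)
  then show ?case
    using Lam(2)[of "Suc k" "(level_of L A = Knd) # L"] by (simp)
next
  case (Prod A B)
  then show ?case
    using Prod(2)[of "Suc k" "(level_of L A = Knd) # L"] by (simp)
qed simp_all

lemma has_fam_redex_lift:
  "k \<le> length L \<Longrightarrow> has_fam_redex (insert_at k b L) (lift k M) = has_fam_redex L M"
proof (induct M arbitrary: k L)
  case (App M N)
  have "(\<exists>B C. lift k M = Lam B C) = (\<exists>B C. M = Lam B C)"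
    by (cases M) auto
  with App show ?case
    by (simp add: level_of_lift)
next
  case (Lam A M)
  then show ?case
    using Lam(2)[of "Suc k" "(level_of L A = Knd) # L"] by (simp add: level_of_lift)
next
  case (Prod A B)
  then show ?case
    using Prod(2)[of "Suc k" "(level_of L A = Knd) # L"] by (simp add: level_of_lift)
qed simp_all

lemma level_of_lift0: "level_of (b # L) (lift 0 N) = level_of L N"
  using level_of_lift[of 0 L b N] by simp

lemma has_fam_redex_lift0: "has_fam_redex (b # L) (lift 0 N) = has_fam_redex L N"
  using has_fam_redex_lift[of 0 L b N] by simp

text \<open>Substituting an object \<open>N\<close> for an object variable preserves levels and creates no
  family-level redex: a new redex could only arise where the variable stands in function
  position, and it is family-level only if the variable is a family variable.\<close>

lemma level_of_subst:
  assumes "k < length L" and "\<not> L ! k" and "level_of (remove_at k L) N = Obj"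
  shows "level_of (remove_at k L) (subst M k N) = level_of L M"
  using assms
proof (induct M arbitrary: k L N)
  case (Var i)
  then show ?case
    by (auto simp: remove_at_def nth_append)
next
  case (Lam A M)
  then show ?case
    using Lam(2)[of "Suc k" "(level_of L A = Knd) # L" "lift 0 N"] by (simp add: level_of_lift0)
next
  case (Prod A B)
  then show ?case
    using Prod(2)[of "Suc k" "(level_of L A = Knd) # L" "lift 0 N"] by (simp add: level_of_lift0)
qed simp_all

lemma subst_eq_Lam: "subst M k N = Lam B C \<Longrightarrow> M = Var k \<or> (\<exists>B' C'. M = Lam B' C')"
  by (cases M) (auto split: if_splits)

lemma has_fam_redex_subst:
  assumes "k < length L" and "\<not> L ! k" and "level_of (remove_at k L) N = Obj"
    and "\<not> has_fam_redex L M" and "\<not> has_fam_redex (remove_at k L) N"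
  shows "\<not> has_fam_redex (remove_at k L) (subst M k N)"
  using assms
proof (induct M arbitrary: k L N)
  case (App M1 M2)
  have "\<not> ((\<exists>B C. subst M1 k N = Lam B C) \<and> level_of L M1 = Fam)"
    using App(3,4,6) by (auto dest!: subst_eq_Lam)
  with App show ?case
    by (simp add: level_of_subst)
next
  case (Lam A M)
  then show ?case
    using Lam(2)[of "Suc k" "(level_of L A = Knd) # L" "lift 0 N"]
    by (simp add: level_of_subst level_of_lift0 has_fam_redex_lift0)
next
  case (Prod A B)
  then show ?case
    using Prod(2)[of "Suc k" "(level_of L A = Knd) # L" "lift 0 N"]
    by (simp add: level_of_subst level_of_lift0 has_fam_redex_lift0)
qed auto

lemma has_fam_redex_subst0:
  "\<not> has_fam_redex (False # L) C \<Longrightarrow> \<not> has_fam_redex L N \<Longrightarrow> level_of L N = Obj \<Longrightarrow>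
   \<not> has_fam_redex L (subst C 0 N)"
  using has_fam_redex_subst[of 0 "False # L" N C] by simp

lemma subterm_fam_redex:
  "subterm_ctx \<Gamma> M \<Delta> (App (Lam B C) P) \<Longrightarrow> level_of (ctx_fams \<Delta>) (Lam B C) = Fam \<Longrightarrow>
   has_fam_redex (ctx_fams \<Gamma>) M"
  by (induct \<Gamma> M \<Delta> "App (Lam B C) P" rule: subterm_ctx.induct) auto

section \<open>Eliminating Kind-level redexes\<close>

lemma fam_redex_free_App:
  assumes ps: "pts_spec Srt Ax Rl"
    and M: "typS Srt Ax Rl \<Gamma> M (Prod A B)" and N: "typS Srt Ax Rl \<Gamma> N A"
    and M_free: "\<not> has_fam_redex (ctx_fams \<Gamma>) M" and N_free: "\<not> has_fam_redex (ctx_fams \<Gamma>) N"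
  shows "\<exists>P. beta_star (App M N) P \<and> \<not> has_fam_redex (ctx_fams \<Gamma>) P"
proof (cases "(\<exists>B C. M = Lam B C) \<and> level_of (ctx_fams \<Gamma>) M = Fam")
  case True
  then obtain A' M' where Lam: "M = Lam A' M'"
    by blast
  obtain B' s where "typS Srt Ax Rl \<Gamma> (Prod A' B') s"
    using typ_LamE[OF M[unfolded Lam]] by blast
  then have "level_of (ctx_fams \<Gamma>) A' = Fam"
    using level_of_type[OF ps] typ_ProdE by blast
  with M_free Lam have "\<not> has_fam_redex (False # ctx_fams \<Gamma>) M'"
    by simp
  moreover obtain s' where "typS Srt Ax Rl \<Gamma> A TypeS"
    using type_correctness[OF ps M] typ_ProdE by blast
  then have "level_of (ctx_fams \<Gamma>) N = Obj"
    using level_of_object[OF ps N] by blast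
  ultimately have "\<not> has_fam_redex (ctx_fams \<Gamma>) (subst M' 0 N)"
    using N_free has_fam_redex_subst0 by blast
  moreover have "beta (App M N) (subst M' 0 N)"
    unfolding Lam by (auto intro: ctxclos.root beta_root.intros)
  ultimately show ?thesis
    by blast
next
  case False
  with M_free N_free show ?thesis
    by auto
qed

lemma level_of_type_reduct:
  assumes ps: "pts_spec Srt Ax Rl" and A: "typS Srt Ax Rl \<Gamma> A TypeS" and red: "beta_star A A'"
  shows "level_of (ctx_fams \<Gamma>) A' = level_of (ctx_fams \<Gamma>) A"
  using level_of_type[OF ps] A subject_reduction_reds[OF ps beta_star_reds[OF red] A] by simp

text \<open>Innermost strategy: the only redexes contracted are family-level ones whose function and
  argument are already free of family-level redexes, so the contractum is free of them too and
  structural recursion terminates.\<close>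

lemma fam_redex_free_reduct:
  assumes ps: "pts_spec Srt Ax Rl"
  shows "typS Srt Ax Rl \<Gamma> M C \<Longrightarrow> \<exists>M'. beta_star M M' \<and> \<not> has_fam_redex (ctx_fams \<Gamma>) M'"
proof (induct M arbitrary: \<Gamma> C)
  case (App M N)
  obtain A B where M: "typS Srt Ax Rl \<Gamma> M (Prod A B)" and N: "typS Srt Ax Rl \<Gamma> N A"
    using typ_AppE[OF App(3)] by blast
  obtain M' where M': "beta_star M M'" "\<not> has_fam_redex (ctx_fams \<Gamma>) M'"
    using App(1)[OF M] by blast
  obtain N' where N': "beta_star N N'" "\<not> has_fam_redex (ctx_fams \<Gamma>) N'"
    using App(2)[OF N] by blast
  obtain P where "beta_star (App M' N') P" "\<not> has_fam_redex (ctx_fams \<Gamma>) P"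
    using fam_redex_free_App[OF ps subject_reduction_reds[OF ps beta_star_reds[OF M'(1)] M]
        subject_reduction_reds[OF ps beta_star_reds[OF N'(1)] N] M'(2) N'(2)]
    by blast
  moreover have "beta_star (App M N) (App M' N')"
    using M'(1) N'(1) by (rule rtranclp_ctxclos_App)
  ultimately show ?case
    by (meson rtranclp_trans)
next
  case (Lam A M)
  obtain B s where A: "typS Srt Ax Rl \<Gamma> A TypeS" and M: "typS Srt Ax Rl (A # \<Gamma>) M B"
    using typ_LamE[OF Lam(3)] typ_ProdE by blast
  obtain A' where A': "beta_star A A'" "\<not> has_fam_redex (ctx_fams \<Gamma>) A'"
    using Lam(1)[OF A] by blast
  obtain M' where M': "beta_star M M'" "\<not> has_fam_redex (ctx_fams (A # \<Gamma>)) M'"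
    using Lam(2)[OF M] by blast
  with A' M' show ?case
    by (auto simp: level_of_type_reduct[OF ps A A'(1)] intro: rtranclp_ctxclos_Lam)
next
  case (Prod A B)
  obtain s where A: "typS Srt Ax Rl \<Gamma> A TypeS" and B: "typS Srt Ax Rl (A # \<Gamma>) B s"
    using typ_ProdE[OF Prod(3)] by blast
  obtain A' where A': "beta_star A A'" "\<not> has_fam_redex (ctx_fams \<Gamma>) A'"
    using Prod(1)[OF A] by blast
  obtain B' where B': "beta_star B B'" "\<not> has_fam_redex (ctx_fams (A # \<Gamma>)) B'"
    using Prod(2)[OF B] by blast
  with A' B' show ?case
    by (auto simp: level_of_type_reduct[OF ps A A'(1)] intro: rtranclp_ctxclos_Prod)
qed auto

lemma has_kind_redex_imp_has_fam_redex:
  assumes ps: "pts_spec Srt Ax Rl" and "has_kind_redex (sigS Srt Ax Rl) (RS Ax Rl) \<Gamma> M"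
  shows "has_fam_redex (ctx_fams \<Gamma>) M"
proof -
  obtain \<Delta> B C P D where sub: "subterm_ctx \<Gamma> M \<Delta> (App (Lam B C) P)"
    and "typS Srt Ax Rl \<Delta> (App (Lam B C) P) D" and "typS Srt Ax Rl \<Delta> D KindS"
    using assms(2) unfolding has_kind_redex_def kind_level_def by blast
  then have "level_of (ctx_fams \<Delta>) (App (Lam B C) P) = Fam"
    using level_of_kind_level[OF ps] by blast
  with sub show ?thesis
    by (simp add: subterm_fam_redex)
qed

theorem lemma5p3:
  fixes Srt :: "'s set" and Ax :: "('s \<times> 's) set" and Rl :: "('s \<times> 's \<times> 's) set"
    and \<Gamma> :: "'s cst trm list" and M A :: "'s cst trm"
  assumes "pts_spec Srt Ax Rl"
    and "functional_spec Srt Ax Rl"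
    and "wfS Srt Ax Rl \<Gamma>"
    and "typS Srt Ax Rl \<Gamma> M A"
  shows "\<exists>M'. beta_star M M' \<and> minus_term Srt Ax Rl \<Gamma> M'"
proof -
  obtain M' where M': "beta_star M M'" "\<not> has_fam_redex (ctx_fams \<Gamma>) M'"
    using fam_redex_free_reduct[OF assms(1,4)] by blast
  moreover have "typS Srt Ax Rl \<Gamma> M' A"
    using subject_reduction_reds[OF assms(1) beta_star_reds[OF M'(1)] assms(4)] .
  ultimately show ?thesis
    unfolding minus_term_def using has_kind_redex_imp_has_fam_redex[OF assms(1)] by blast
qed

end
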